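(* Given any integers $W\ge6$, $L\ge2$ and any $\theta_i\in\{0,1\}$ for $i=0,1,\dots,W^2L^2-1$, there exists a ReLU network $\phi:\mathbb{R}\to\mathbb{R}$, $\phi\in\mathcal{NN}(8W+4,4L)$, such that $\phi(i)=\theta_i$ for $i=0,1,\dots,W^2L^2-1$ and $\mathrm{Lip}\,\phi\le2\cdot2^{L^2}+L^2$.
   Context: $\sigma(x)=\max(x,0)$. $\mathcal{NN}(W,L)$: functions $\phi(x)=T_L(\sigma(T_{L-1}(\cdots\sigma(T_0(x))\cdots)))$ with affine maps $T_l$, ReLU componentwise, all hidden layer sizes $\le W$ and depth $\le L$. $\mathrm{Lip}\,\phi$ is the Lipschitz constant of $\phi$. *)

theory Defs
  imports "HOL-Analysis.Analysis"
begin

text \<open>Vectors in R^d are represented as functions nat => real, only the first d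
  coordinates being relevant.\<close>

definition aff_map :: "(nat \<Rightarrow> nat \<Rightarrow> real) \<Rightarrow> (nat \<Rightarrow> real) \<Rightarrow> nat \<Rightarrow> nat
    \<Rightarrow> (nat \<Rightarrow> real) \<Rightarrow> (nat \<Rightarrow> real)" where
  "aff_map A b m n x = (\<lambda>i. if i < n then (\<Sum>j<m. A i j * x j) + b i else 0)"

definition relu :: "real \<Rightarrow> real" where
  "relu x = max x 0"

definition relu_vec :: "(nat \<Rightarrow> real) \<Rightarrow> (nat \<Rightarrow> real)" where
  "relu_vec x = (\<lambda>i. relu (x i))"

text \<open>Evaluation of T_k o sigma o ... o sigma o T_0, layers = [(A_0,b_0),...,(A_k,b_k)],
  ds = [d_0, d_1, ..., d_{k+1}] the layer widths (T_l : R^{d_l} -> R^{d_{l+1}}).\<close>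

fun net_eval :: "((nat \<Rightarrow> nat \<Rightarrow> real) \<times> (nat \<Rightarrow> real)) list \<Rightarrow> nat list
    \<Rightarrow> (nat \<Rightarrow> real) \<Rightarrow> (nat \<Rightarrow> real)" where
  "net_eval [] ds x = x"
| "net_eval [(A, b)] ds x = aff_map A b (ds ! 0) (ds ! 1) x"
| "net_eval ((A, b) # l # ls) ds x =
     net_eval (l # ls) (tl ds) (relu_vec (aff_map A b (ds ! 0) (ds ! 1) x))"

text \<open>NN(W,L): scalar ReLU networks R -> R with at most L hidden layers
  (i.e. at most L+1 affine maps T_0..T_L), each hidden layer of width at most W.\<close>

definition NN :: "nat \<Rightarrow> nat \<Rightarrow> (real \<Rightarrow> real) set" where
  "NN W L = {\<phi>. \<exists>layers ds.
      layers \<noteq> [] \<and> length layers \<le> L + 1 \<and>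
      length ds = length layers + 1 \<and> hd ds = 1 \<and> last ds = 1 \<and>
      (\<forall>i. 0 < i \<and> i < length layers \<longrightarrow> ds ! i \<le> W) \<and>
      (\<forall>x. \<phi> x = net_eval layers ds (\<lambda>_. x) 0)}"

end

theory Submission
  imports Defs
begin

text \<open>Write \<open>M = W L\<close> and cut the \<open>M\<^sup>2\<close> samples into \<open>M\<close> blocks of \<open>M\<close> consecutive points,
  each block into \<open>W\<close> groups of \<open>L\<close> points. The \<open>L\<close> bits of a group are stored as one binary
  fraction, and the \<open>W\<close> fractions of a block as the increments, lying in \<open>[0, 2]\<close>, of their
  partial sums; one ReLU layer recovers the fraction of a given group from these increments.
  Along the line, zigzags of slope \<open>\<plusminus>1\<close> compute the position of \<open>x\<close> in its block and the offset of
  that position in its group, a staircase computes the group, and \<open>W\<close> staircases interpolate the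
  increments of consecutive blocks linearly. The bit at the offset is then read off the fraction
  by \<open>L\<close> steps of the doubling map, step \<open>e\<close> extracting the leading bit by a clip of slope
  \<open>2 ^ (L - e)\<close>. On each unit interval only one of the fraction and the offset varies, with slope
  at most \<open>1\<close> in \<open>x\<close>, and reading a bit is \<open>2 ^ (L\<^sup>2)\<close>-Lipschitz in the fraction and
  \<open>L\<close>-Lipschitz in the offset; hence the network is \<open>2 ^ (L\<^sup>2)\<close>-Lipschitz. It has \<open>2 L + 3\<close> hidden layers of width at
  most \<open>5 W + 3\<close>.\<close>

subsection \<open>Assembling networks layer by layer\<close>

lemma net_eval_snoc:
  assumes "layers \<noteq> []" "length ds = length layers + 1"
  shows "net_eval (layers @ [(A, b)]) (ds @ [d]) x = aff_map A b (last ds) d (relu_vec (net_eval layers ds x))"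
  using assms
proof (induction layers arbitrary: ds x)
  case Nil
  then show ?case by simp
next
  case (Cons l ls)
  obtain C c where l: "l = (C, c)" by (cases l)
  show ?case
  proof (cases ls)
    case Nil
    with Cons.prems obtain d0 d1 where "ds = [d0, d1]"
      by (cases ds; cases "tl ds"; auto)
    with Nil l show ?thesis by simp
  next
    case (Cons l2 ls2)
    from Cons.prems obtain d0 ds' where ds: "ds = d0 # ds'" by (cases ds) auto
    with Cons.prems Cons have "ds' \<noteq> []" by auto
    have "net_eval (ls @ [(A, b)]) (ds' @ [d]) y = aff_map A b (last ds') d (relu_vec (net_eval ls ds' y))" for y
      using Cons.IH[of ds' y] Cons.prems ds Cons by simp
    with l ds Cons \<open>ds' \<noteq> []\<close> show ?thesis by (simp add: nth_append)
  qed
qed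

definition hidden_layers :: "nat \<Rightarrow> nat \<Rightarrow> nat \<Rightarrow> (real \<Rightarrow> nat \<Rightarrow> real) \<Rightarrow> bool" where
  "hidden_layers Wd k d H \<longleftrightarrow> (\<exists>layers ds. layers \<noteq> [] \<and> length layers = k \<and> length ds = k + 1 \<and>
     hd ds = 1 \<and> last ds = d \<and> (\<forall>i. 0 < i \<and> i \<le> k \<longrightarrow> ds ! i \<le> Wd) \<and>
     (\<forall>x. H x = relu_vec (net_eval layers ds (\<lambda>_. x))))"

lemma hidden_layers_first:
  assumes "d \<le> Wd" "\<And>x. relu_vec (aff_map A b 1 d (\<lambda>_. x)) = H x"
  shows "hidden_layers Wd 1 d H"
  unfolding hidden_layers_def
  using assms by (intro exI[of _ "[(A, b)]"] exI[of _ "[1, d]"]) (auto simp: nth_Cons split: nat.splits)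

lemma hidden_layers_snoc:
  assumes "hidden_layers Wd k d H" "d' \<le> Wd" "\<And>x. relu_vec (aff_map A b d d' (H x)) = H' x"
  shows "hidden_layers Wd (Suc k) d' H'"
proof -
  obtain layers ds where h: "layers \<noteq> []" "length layers = k" "length ds = k + 1" "hd ds = 1"
    "last ds = d" "\<forall>i. 0 < i \<and> i \<le> k \<longrightarrow> ds ! i \<le> Wd" "\<forall>x. H x = relu_vec (net_eval layers ds (\<lambda>_. x))"
    using assms(1) unfolding hidden_layers_def by blast
  have "(ds @ [d']) ! i \<le> Wd" if "0 < i" "i \<le> Suc k" for i
    using h assms(2) that by (cases "i < k + 1") (auto simp: nth_append)
  moreover have "hd (ds @ [d']) = 1" using h by (cases ds) auto
  moreover have "H' x = relu_vec (net_eval (layers @ [(A, b)]) (ds @ [d']) (\<lambda>_. x))" for x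
    using h assms(3)[of x] net_eval_snoc[of layers ds A b d' "\<lambda>_. x"] by simp
  ultimately show ?thesis
    unfolding hidden_layers_def using h by (intro exI[of _ "layers @ [(A, b)]"] exI[of _ "ds @ [d']"]) auto
qed

lemma NN_if_hidden_layers:
  assumes "hidden_layers Wd k d H" "k \<le> Lm" "\<And>x. aff_map A b d 1 (H x) 0 = f x"
  shows "f \<in> NN Wd Lm"
proof -
  obtain layers ds where h: "layers \<noteq> []" "length layers = k" "length ds = k + 1" "hd ds = 1"
    "last ds = d" "\<forall>i. 0 < i \<and> i \<le> k \<longrightarrow> ds ! i \<le> Wd" "\<forall>x. H x = relu_vec (net_eval layers ds (\<lambda>_. x))"
    using assms(1) unfolding hidden_layers_def by blast
  have "(ds @ [1]) ! i \<le> Wd" if "0 < i" "i < length (layers @ [(A, b)])" for i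
    using h that by (auto simp: nth_append)
  moreover have "hd (ds @ [1]) = 1" using h by (cases ds) auto
  moreover have "f x = net_eval (layers @ [(A, b)]) (ds @ [1]) (\<lambda>_. x) 0" for x
    using h assms(3)[of x] net_eval_snoc[of layers ds A b 1 "\<lambda>_. x"] by simp
  ultimately show ?thesis
    unfolding NN_def using h assms(2) by (intro CollectI exI[of _ "layers @ [(A, b)]"] exI[of _ "ds @ [1]"]) auto
qed

definition row_dot :: "nat \<Rightarrow> (nat \<Rightarrow> real) \<Rightarrow> (nat \<Rightarrow> real) \<Rightarrow> real" where
  "row_dot d r h = (\<Sum>j<d. r j * h j)"

definition coord_row :: "nat \<Rightarrow> real \<Rightarrow> nat \<Rightarrow> real" where
  "coord_row p c j = (if j = p then c else 0)"

definition block_row :: "nat \<Rightarrow> nat \<Rightarrow> (nat \<Rightarrow> real) \<Rightarrow> nat \<Rightarrow> real" where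
  "block_row q n f j = (if q \<le> j \<and> j < q + n then f (j - q) else 0)"

lemma row_dot_add: "row_dot d (\<lambda>j. F j + G j) h = row_dot d F h + row_dot d G h"
  by (simp add: row_dot_def distrib_right sum.distrib)

lemma row_dot_minus: "row_dot d (\<lambda>j. - F j) h = - row_dot d F h"
  by (simp add: row_dot_def sum_negf)

lemma row_dot_scale: "row_dot d (\<lambda>j. c * F j) h = c * row_dot d F h"
  by (simp add: row_dot_def sum_distrib_left mult.assoc)

lemma row_dot_zero: "row_dot d (\<lambda>j. 0) h = 0"
  by (simp add: row_dot_def)

lemma row_dot_one: "row_dot (Suc 0) r h = r 0 * h 0"
  by (simp add: row_dot_def)

lemma row_dot_coord_row:
  assumes "p < d"
  shows "row_dot d (coord_row p c) h = c * h p"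
proof -
  have "row_dot d (coord_row p c) h = (\<Sum>j<d. if j = p then c * h j else 0)"
    unfolding row_dot_def coord_row_def by (rule sum.cong) auto
  with assms show ?thesis by simp
qed

lemma row_dot_block_row:
  assumes "q + n \<le> d"
  shows "row_dot d (block_row q n f) h = (\<Sum>u<n. f u * h (q + u))"
proof -
  have "row_dot d (block_row q n f) h = (\<Sum>j\<in>{q..<q+n}. f (j - q) * h j)"
    unfolding row_dot_def block_row_def using assms by (intro sum.mono_neutral_cong_right) auto
  also have "\<dots> = (\<Sum>u<n. f u * h (q + u))"
    by (rule sum.reindex_bij_witness[of _ "\<lambda>u. u + q" "\<lambda>j. j - q"]) auto
  finally show ?thesis .
qed

lemma relu_vec_aff_map_eqI:
  assumes "\<And>i. i < n \<Longrightarrow> relu (row_dot m (A i) h + b i) = H i" "\<And>i. n \<le> i \<Longrightarrow> H i = 0"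
  shows "relu_vec (aff_map A b m n h) = H"
proof
  fix i
  show "relu_vec (aff_map A b m n h) i = H i"
    using assms[of i] by (cases "i < n") (simp_all add: relu_vec_def aff_map_def row_dot_def relu_def)
qed

lemma less_10_cases: "(i::nat) < 10 \<Longrightarrow> i = 0 \<or> i = 1 \<or> i = 2 \<or> i = 3 \<or> i = 4 \<or> i = 5 \<or> i = 6 \<or> i = 7 \<or> i = 8 \<or> i = 9"
  by arith

lemma interval_offsetE:
  fixes i q n :: nat
  assumes "q \<le> i" "i < q + n" "\<And>k. k < n \<Longrightarrow> i = q + k \<Longrightarrow> P"
  shows P
  using assms(1,2) by (intro assms(3)[of "i - q"]) auto

lemma relu_minus_relu_neg: "relu a - relu (- a) = a"
  by (simp add: relu_def)

lemma relu_relu: "relu (relu x) = relu x"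
  by (simp add: relu_def)

lemma relu_relu_diff: "c \<ge> 0 \<Longrightarrow> relu (relu x - c) = relu (x - c)"
  by (simp add: relu_def)

lemma relu_0: "relu 0 = 0"
  by (simp add: relu_def)

lemma relu_eq_self: "0 \<le> x \<Longrightarrow> relu x = x"
  by (simp add: relu_def)

lemma relu_eq_0: "x \<le> 0 \<Longrightarrow> relu x = 0"
  by (simp add: relu_def)

lemma relu_lipschitz: "\<bar>relu a - relu b\<bar> \<le> \<bar>a - b\<bar>"
  by (simp add: relu_def)

definition ramp :: "real \<Rightarrow> real" where
  "ramp u = relu (u + 1) - relu u"

definition clip :: "real \<Rightarrow> real \<Rightarrow> real" where
  "clip c u = relu u - relu (u - c)"

lemma ramp_eq_0: "u \<le> -1 \<Longrightarrow> ramp u = 0"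
  by (simp add: ramp_def relu_def)

lemma ramp_eq_1: "0 \<le> u \<Longrightarrow> ramp u = 1"
  by (simp add: ramp_def relu_def)

lemma ramp_linear: "-1 \<le> u \<Longrightarrow> u \<le> 0 \<Longrightarrow> ramp u = u + 1"
  by (simp add: ramp_def relu_def)

lemma clip_eq_0: "u \<le> 0 \<Longrightarrow> 0 \<le> c \<Longrightarrow> clip c u = 0"
  by (simp add: clip_def relu_def)

lemma clip_eq_bound: "c \<le> u \<Longrightarrow> 0 \<le> c \<Longrightarrow> clip c u = c"
  by (simp add: clip_def relu_def)

lemma clip_linear: "0 \<le> u \<Longrightarrow> u \<le> c \<Longrightarrow> clip c u = u"
  by (simp add: clip_def relu_def)

lemma clip_bounds: "0 \<le> c \<Longrightarrow> 0 \<le> clip c u \<and> clip c u \<le> c"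
  by (auto simp: clip_def relu_def max_def)

lemma clip_lipschitz: "\<bar>clip c u - clip c v\<bar> \<le> \<bar>u - v\<bar>"
  by (simp add: clip_def relu_def)

lemma relu_double_minus_lipschitz: "\<bar>(relu (c + 2 * b) - b) - (relu (c + 2 * b') - b')\<bar> \<le> \<bar>b - b'\<bar>"
  by (simp add: relu_def)

lemma clip_eq_relu_diff: "clip c (u - p) = relu (u - p) - relu (u - (p + c))"
  by (simp add: clip_def algebra_simps)

lemma ramp_eq_relu_diff: "ramp (u - q) = relu (u - (q - 1)) - relu (u - q)"
  by (simp add: ramp_def algebra_simps)

subsection \<open>Zigzags and staircases\<close>

lemma sum_lessThan_add:
  fixes a b :: nat
  shows "(\<Sum>j<a + b. f j) = (\<Sum>j<a. f j) + (\<Sum>u<b. f (a + u))"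
  by (induction b) (auto simp: add.assoc)

lemma sum_lessThan_vanishing_above:
  fixes f :: "nat \<Rightarrow> 'a::comm_monoid_add"
  assumes "a < C" "\<And>j. a < j \<Longrightarrow> j < C \<Longrightarrow> f j = 0"
  shows "(\<Sum>j<C. f j) = (\<Sum>j<a. f j) + f a"
proof -
  have "(\<Sum>j<C. f j) = (\<Sum>j<Suc a. f j) + (\<Sum>u<C - Suc a. f (Suc a + u))"
    using sum_lessThan_add[of f "Suc a" "C - Suc a"] assms(1) by simp
  also have "(\<Sum>u<C - Suc a. f (Suc a + u)) = 0"
    using assms by (intro sum.neutral) auto
  finally show ?thesis by simp
qed

lemma sum_mult_combine_diff:
  fixes f A B :: "nat \<Rightarrow> real"
  shows "(\<Sum>u<n. f u * A u) + (\<Sum>u<n. - f u * B u) = (\<Sum>u<n. f u * (A u - B u))"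
  by (simp add: algebra_simps sum_subtractf sum_negf)

lemma less_mult_decomp:
  fixes n K C :: nat
  assumes "n < C * K"
  obtains a r where "n = a * K + r" "a < C" "r < K"
proof
  have "0 < K" using assms by (cases K) auto
  then show "n div K < C" "n mod K < K" using assms by (simp_all add: div_less_iff_less_mult)
qed simp

definition snake :: "nat \<Rightarrow> nat \<Rightarrow> nat \<Rightarrow> nat" where
  "snake K a r = (if even a then r else K - 1 - r)"

lemma snake_less: "r < K \<Longrightarrow> snake K a r < K"
  by (auto simp: snake_def)

lemma snake_snake: "r < K \<Longrightarrow> snake K a (snake K a r) = r"
  by (auto simp: snake_def)

text \<open>For \<open>a < C\<close>, the zigzag runs through \<open>0, \<dots>, K - 1\<close> on \<open>[a K, (a + 1) K - 1]\<close>, upwards for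
  even \<open>a\<close> and downwards for odd \<open>a\<close>, and it is constant on the gaps \<open>[(a + 1) K - 1, (a + 1) K]\<close>.
  The staircase moves exactly on these gaps, by \<open>c a\<close> on the \<open>a\<close>-th one.\<close>

definition zigzag :: "nat \<Rightarrow> nat \<Rightarrow> real \<Rightarrow> real" where
  "zigzag K C u = (\<Sum>j<C. (-1) ^ j * clip (real K - 1) (u - real (j * K)))"

definition staircase :: "nat \<Rightarrow> nat \<Rightarrow> (nat \<Rightarrow> real) \<Rightarrow> real \<Rightarrow> real" where
  "staircase K C c u = (\<Sum>j<C. c j * ramp (u - real ((j + 1) * K)))"

lemma zigzag_on_block:
  assumes K: "1 \<le> K" and r: "r < K" and a: "a < C"
    and u: "real (a * K + r) \<le> u" "u \<le> real (a * K + r) + 1"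
  shows "zigzag K C u = (if even a then 0 else real K - 1) + (-1) ^ a * clip (real K - 1) (u - real (a * K))"
proof -
  let ?f = "\<lambda>j. (-1) ^ j * clip (real K - 1) (u - real (j * K))"
  have "?f j = 0" if "a < j" for j
  proof -
    have "real ((a + 1) * K) \<le> real (j * K)" using that by (simp only: of_nat_le_iff mult_le_mono1)
    then show ?thesis using u r K by (intro mult_eq_0_iff[THEN iffD2] disjI2 clip_eq_0) auto
  qed
  then have "zigzag K C u = (\<Sum>j<a. ?f j) + ?f a"
    unfolding zigzag_def using a by (intro sum_lessThan_vanishing_above) auto
  also have "(\<Sum>j<a. ?f j) = (\<Sum>j<a. (-1) ^ j) * (real K - 1)"
  proof -
    have "?f j = (-1) ^ j * (real K - 1)" if "j < a" for j
    proof -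
      have "real ((j + 1) * K) \<le> real (a * K)" using that by (simp only: of_nat_le_iff mult_le_mono1)
      then show ?thesis using u K by (subst clip_eq_bound) auto
    qed
    then show ?thesis by (simp add: sum_distrib_right)
  qed
  also have "(\<Sum>j<a. (-1) ^ j :: real) = (if even a then 0 else 1)"
    by (induction a) auto
  finally show ?thesis by simp
qed

lemma zigzag_of_nat:
  assumes "1 \<le> K" "r < K" "a < C"
  shows "zigzag K C (real (a * K + r)) = real (snake K a r)"
proof -
  have "clip (real K - 1) (real (a * K + r) - real (a * K)) = real r"
    using assms by (subst clip_linear) auto
  then show ?thesis
    using zigzag_on_block[OF assms, of "real (a * K + r)"] assms by (auto simp: snake_def of_nat_diff)
qed

lemma zigzag_unit_interval:
  assumes K: "1 \<le> K" and r: "r < K" and a: "a < C"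
    and u: "real (a * K + r) \<le> u" "u \<le> real (a * K + r) + 1"
  shows "zigzag K C u = real (snake K a r) + (if r = K - 1 then 0 else (-1) ^ a * (u - real (a * K + r)))"
proof (cases "r = K - 1")
  case True
  then have "clip (real K - 1) (u - real (a * K)) = real K - 1" "clip (real K - 1) (real r) = real K - 1"
    using u K by (auto intro!: clip_eq_bound simp: of_nat_diff)
  then show ?thesis
    using zigzag_on_block[OF assms] zigzag_on_block[OF K r a, of "real (a * K + r)"] zigzag_of_nat[OF K r a]
    by (simp add: True)
next
  case False
  then have "real r + 1 \<le> real K - 1" using r K by linarith
  then have "clip (real K - 1) (u - real (a * K)) = real r + (u - real (a * K + r))"
    using u by (subst clip_linear) auto
  then show ?thesis
    using zigzag_on_block[OF assms] False r by (auto simp: snake_def of_nat_diff algebra_simps)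
qed

lemma zigzag_nonpos:
  assumes "u \<le> 0" "1 \<le> K"
  shows "zigzag K C u = 0"
proof -
  have "clip (real K - 1) (u - real (j * K)) = 0" for j
    using assms of_nat_0_le_iff[of "j * K"] by (intro clip_eq_0) linarith+
  then show ?thesis by (simp add: zigzag_def)
qed

lemma zigzag_beyond:
  assumes "real (C * K) - 1 \<le> u" "1 \<le> K"
  shows "zigzag K C u = (\<Sum>j<C. (-1) ^ j * (real K - 1))"
  unfolding zigzag_def
proof (intro sum.cong refl)
  fix j assume "j \<in> {..<C}"
  then have "Suc j * K \<le> C * K" by (intro mult_le_mono1) simp
  then have "real (Suc j * K) \<le> real (C * K)" by (simp only: of_nat_le_iff)
  then show "(-1) ^ j * clip (real K - 1) (u - real (j * K)) = (-1) ^ j * (real K - 1)"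
    using assms by (subst clip_eq_bound) auto
qed

lemma staircase_unit_interval:
  assumes K: "1 \<le> K" and r: "r < K" and a: "a < C"
    and u: "real (a * K + r) \<le> u" "u \<le> real (a * K + r) + 1"
  shows "staircase K C c u = (\<Sum>j<a. c j) + (if r = K - 1 then c a * (u - real (a * K + r)) else 0)"
proof -
  let ?f = "\<lambda>j. c j * ramp (u - real ((j + 1) * K))"
  have "?f j = 0" if "a < j" for j
  proof -
    have "(a + 2) * K \<le> (j + 1) * K" using that by (intro mult_le_mono1) simp
    moreover have "(a + 2) * K = a * K + 2 * K" by (simp add: algebra_simps)
    ultimately have "a * K + r + 2 \<le> (j + 1) * K" using r K by linarith
    then have "real (a * K + r) + 2 \<le> real ((j + 1) * K)" by linarith
    then show ?thesis using u by (simp add: ramp_eq_0)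
  qed
  then have "staircase K C c u = (\<Sum>j<a. ?f j) + ?f a"
    unfolding staircase_def using a by (intro sum_lessThan_vanishing_above) auto
  also have "(\<Sum>j<a. ?f j) = (\<Sum>j<a. c j)"
  proof (intro sum.cong refl)
    fix j assume "j \<in> {..<a}"
    then have "(j + 1) * K \<le> a * K" by (intro mult_le_mono1) simp
    then have "real ((j + 1) * K) \<le> real (a * K)" by (simp only: of_nat_le_iff)
    then show "?f j = c j" using u by (simp add: ramp_eq_1)
  qed
  also have "?f a = (if r = K - 1 then c a * (u - real (a * K + r)) else 0)"
  proof (cases "r = K - 1")
    case True
    then have "(a + 1) * K = a * K + r + 1" using K by simp
    then have "ramp (u - real ((a + 1) * K)) = u - real (a * K + r)"
      using u by (subst ramp_linear) simp_all
    then show ?thesis using True by simp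
  next
    case False
    then have "a * K + r + 2 \<le> (a + 1) * K" using r by simp
    then have "real (a * K + r) + 2 \<le> real ((a + 1) * K)" by linarith
    then show ?thesis using u False by (simp add: ramp_eq_0)
  qed
  finally show ?thesis .
qed

lemma staircase_nonpos:
  assumes "u \<le> 0" "1 \<le> K"
  shows "staircase K C c u = 0"
proof -
  have "ramp (u - real ((j + 1) * K)) = 0" for j
  proof -
    have "1 * K \<le> (j + 1) * K" by (intro mult_le_mono1) simp
    then have "real K \<le> real ((j + 1) * K)" by (simp only: of_nat_le_iff mult_1)
    with assms show ?thesis by (intro ramp_eq_0) linarith
  qed
  then show ?thesis by (simp add: staircase_def)
qed

lemma zigzag_add_pieces:
  "zigzag K (C + n) u = zigzag K C u +
     (\<Sum>i<n. (-1) ^ (C + i) * (relu (u - real ((C + i) * K)) - relu (u - (real ((C + i + 1) * K) - 1))))"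
  unfolding zigzag_def sum_lessThan_add by (simp add: clip_eq_relu_diff algebra_simps)

lemma staircase_add_pieces:
  "staircase K (C + n) c u = staircase K C c u +
     (\<Sum>i<n. c (C + i) * (relu (u - (real ((C + i + 1) * K) - 1)) - relu (u - real ((C + i + 1) * K))))"
  unfolding staircase_def sum_lessThan_add by (simp add: ramp_eq_relu_diff)

subsection \<open>Binary codes\<close>

text \<open>\<open>bin_code f e k\<close> is the binary fraction \<open>0.f(e) f(e+1) \<dots> f(e+k-1) 1\<close>. The trailing digit keeps it
  at distance \<open>2 ^ -(k+1)\<close> from \<open>0\<close> and \<open>1\<close>, which lets a clip of slope \<open>2 ^ k\<close> read off its leading bit.\<close>

fun bin_code :: "(nat \<Rightarrow> real) \<Rightarrow> nat \<Rightarrow> nat \<Rightarrow> real" where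
  "bin_code f e 0 = 1 / 2"
| "bin_code f e (Suc k) = f e / 2 + bin_code f (Suc e) k / 2"

lemma bin_code_bounds:
  assumes "\<And>\<tau>. e \<le> \<tau> \<Longrightarrow> \<tau> < e + k \<Longrightarrow> f \<tau> \<in> {0, 1}"
  shows "1 / 2 ^ (k + 1) \<le> bin_code f e k \<and> bin_code f e k \<le> 1 - 1 / 2 ^ (k + 1)"
  using assms
proof (induction k arbitrary: e)
  case 0
  then show ?case by simp
next
  case (Suc k)
  have "1 / 2 ^ (k + 1) \<le> bin_code f (Suc e) k \<and> bin_code f (Suc e) k \<le> 1 - 1 / 2 ^ (k + 1)"
    using Suc.prems by (intro Suc.IH) auto
  moreover have "f e \<in> {0, 1}" using Suc.prems by auto
  moreover have "(2::real) ^ (Suc k + 1) = 2 * 2 ^ (k + 1)" by simp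
  ultimately show ?case by (auto simp: field_simps simp del: power_Suc)
qed

lemma clip_leading_bit_bin_code:
  assumes "\<And>\<tau>. e \<le> \<tau> \<Longrightarrow> \<tau> \<le> e + m \<Longrightarrow> f \<tau> \<in> {0, 1}"
  shows "clip 1 (2 ^ Suc m * (bin_code f e (Suc m) - 1 / 2) + 1 / 2) = f e"
proof -
  define Z where "Z = bin_code f (Suc e) m"
  have "1 / 2 ^ (m + 1) \<le> Z \<and> Z \<le> 1 - 1 / 2 ^ (m + 1)"
    unfolding Z_def using assms by (intro bin_code_bounds) auto
  then have Z: "1 / 2 \<le> 2 ^ m * Z" "2 ^ m * (Z - 1) \<le> - 1 / 2"
    by (auto simp: field_simps)
  have arg: "2 ^ Suc m * (bin_code f e (Suc m) - 1 / 2) = 2 ^ m * (Z + f e - 1)"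
    by (simp add: Z_def field_simps)
  have "f e \<in> {0, 1}" using assms by simp
  then show ?thesis
  proof
    assume "f e = 0"
    then have "2 ^ Suc m * (bin_code f e (Suc m) - 1 / 2) + 1 / 2 \<le> 0"
      unfolding arg using Z(2) by simp
    with \<open>f e = 0\<close> show ?thesis by (simp add: clip_eq_0)
  next
    assume "f e \<in> {1}"
    then have "1 \<le> 2 ^ Suc m * (bin_code f e (Suc m) - 1 / 2) + 1 / 2"
      unfolding arg using Z(1) by (simp add: algebra_simps)
    with \<open>f e \<in> {1}\<close> show ?thesis by (simp add: clip_eq_bound)
  qed
qed

lemma lipschitz_on_UNIV_if_unit_intervals:
  fixes f :: "real \<Rightarrow> real"
  assumes "\<And>n::int. C-lipschitz_on {real_of_int n..real_of_int n + 1} f" "0 \<le> C"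
  shows "C-lipschitz_on UNIV f"
proof (rule lipschitz_onI)
  fix x y :: real
  let ?I = "{\<lfloor>min x y\<rfloor>..\<lfloor>max x y\<rfloor>}"
  have "{min x y..max x y} \<subseteq> (\<Union>n\<in>?I. {real_of_int n..real_of_int n + 1})"
  proof
    fix z assume "z \<in> {min x y..max x y}"
    then have "\<lfloor>z\<rfloor> \<in> ?I" by (auto intro: floor_mono)
    moreover have "z \<in> {real_of_int \<lfloor>z\<rfloor>..real_of_int \<lfloor>z\<rfloor> + 1}" by simp
    ultimately show "z \<in> (\<Union>n\<in>?I. {real_of_int n..real_of_int n + 1})" by blast
  qed
  then have "C-lipschitz_on {min x y..max x y} f"
    using assms by (intro lipschitz_on_closed_Union[where I = ?I]) auto
  then show "dist (f x) (f y) \<le> C * dist x y"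
    by (rule lipschitz_onD) auto
qed (use assms in simp)

lemma of_nat_le_two_pow_square: "real n \<le> 2 ^ (n * n)"
proof (cases "n = 0")
  case False
  have "n < 2 ^ n" by (rule less_exp)
  also have "(2::nat) ^ n \<le> 2 ^ (n * n)" using False by (intro power_increasing) auto
  finally show ?thesis by (simp add: less_imp_le flip: of_nat_le_iff)
qed simp

lemma int_cases_between:
  fixes n :: int and N :: nat
  obtains "n < 0" | "int N - 1 \<le> n" | m where "n = int m" "Suc m < N"
proof (cases "n < 0 \<or> int N - 1 \<le> n")
  case False
  then have "int (Suc (nat n)) < int N" by simp
  then have "Suc (nat n) < N" by (simp only: of_nat_less_iff)
  moreover have "n = int (nat n)" using False by simp
  ultimately show ?thesis using that(3) by blast
qed (use that in blast)

subsection \<open>The interpolating function\<close>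

locale bit_fitting =
  fixes W L :: nat and \<theta> :: "nat \<Rightarrow> real"
  assumes W_pos: "1 \<le> W" and L_pos: "1 \<le> L"
    and bits: "\<And>i. i < (W * L) * (W * L) \<Longrightarrow> \<theta> i \<in> {0, 1}"
begin

abbreviation M :: nat where "M \<equiv> W * L"

text \<open>Blocks, and the groups inside a block, are traversed alternately upwards and downwards, so
  that bit \<open>\<tau>\<close> of group \<open>\<beta>\<close> of block \<open>a\<close> is the sample \<open>bit_index a \<beta> \<tau>\<close>. The
  \<open>code_step k a \<in> [0, 2]\<close> are the increments of \<open>\<beta> \<mapsto> block_code a \<beta> + \<beta> + 1\<close>.\<close>

definition bit_index :: "nat \<Rightarrow> nat \<Rightarrow> nat \<Rightarrow> nat" where
  "bit_index a \<beta> \<tau> = a * M + snake M a (\<beta> * L + snake L \<beta> \<tau>)"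

definition block_code :: "nat \<Rightarrow> nat \<Rightarrow> real" where
  "block_code a \<beta> = bin_code (\<lambda>\<tau>. \<theta> (bit_index a \<beta> \<tau>)) 0 L"

definition code_step :: "nat \<Rightarrow> nat \<Rightarrow> real" where
  "code_step k a = (if k = 0 then block_code a 0 else block_code a k - block_code a (k - 1)) + 1"

definition code_step_jump :: "nat \<Rightarrow> nat \<Rightarrow> real" where
  "code_step_jump k j = (if j + 1 < M then code_step k (j + 1) - code_step k j else 0)"

definition code_step_interp :: "nat \<Rightarrow> real \<Rightarrow> real" where
  "code_step_interp k x = code_step k 0 + staircase M M (code_step_jump k) x"

definition block_pos :: "real \<Rightarrow> real" where
  "block_pos x = zigzag M M x"

definition group_index :: "real \<Rightarrow> real" where
  "group_index v = staircase L W (\<lambda>_. 1) v"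

definition bit_offset :: "real \<Rightarrow> real" where
  "bit_offset v = zigzag L W v"

definition decode :: "(nat \<Rightarrow> real) \<Rightarrow> real \<Rightarrow> real" where
  "decode D b = (\<Sum>k<W. relu (D k + 2 * (b - real k))) - 2 * (\<Sum>k<W. relu (b - real k)) - relu b - 1"

definition slope :: "nat \<Rightarrow> real" where
  "slope e = 2 ^ (L - e)"

definition leading_bit :: "nat \<Rightarrow> real \<Rightarrow> real" where
  "leading_bit e z = clip 1 (slope e * (z - 1 / 2) + 1 / 2)"

primrec shift_code :: "nat \<Rightarrow> real \<Rightarrow> real" where
  "shift_code 0 y = y"
| "shift_code (Suc e) y = 2 * shift_code e y - leading_bit e (shift_code e y)"

definition pick_bit :: "nat \<Rightarrow> real \<Rightarrow> real \<Rightarrow> real" where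
  "pick_bit e y t = relu (leading_bit e (shift_code e y) - \<bar>t - real e\<bar>)"

definition read_bit :: "real \<Rightarrow> real \<Rightarrow> real" where
  "read_bit y t = (\<Sum>e<L. pick_bit e y t)"

definition read_block :: "(nat \<Rightarrow> real) \<Rightarrow> real \<Rightarrow> real" where
  "read_block D v = read_bit (decode D (group_index v)) (bit_offset v)"

definition phi :: "real \<Rightarrow> real" where
  "phi x = read_block (\<lambda>k. code_step_interp k x) (block_pos x)"

lemma bit_index_less:
  assumes "a < M" "\<beta> < W" "\<tau> < L"
  shows "bit_index a \<beta> \<tau> < M * M"
proof -
  have "\<beta> * L + snake L \<beta> \<tau> < M"
    using assms snake_less[of \<tau> L \<beta>] mult_le_mono1[of "Suc \<beta>" W L] by simp
  then have "a * M + snake M a (\<beta> * L + snake L \<beta> \<tau>) < a * M + M"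
    using snake_less by simp
  also have "\<dots> \<le> M * M" using mult_le_mono1[of "Suc a" M M] assms(1) by simp
  finally show ?thesis unfolding bit_index_def .
qed

lemma block_code_bounds:
  assumes "a < M" "\<beta> < W"
  shows "0 \<le> block_code a \<beta> \<and> block_code a \<beta> \<le> 1"
proof -
  have "1 / 2 ^ (L + 1) \<le> block_code a \<beta> \<and> block_code a \<beta> \<le> 1 - 1 / 2 ^ (L + 1)"
    unfolding block_code_def using assms bits bit_index_less by (intro bin_code_bounds) auto
  moreover have "(0::real) \<le> 1 / 2 ^ (L + 1)" by simp
  ultimately show ?thesis by linarith
qed

lemma code_step_bounds:
  assumes "a < M" "k < W"
  shows "0 \<le> code_step k a \<and> code_step k a \<le> 2"
  using assms block_code_bounds[of a k] block_code_bounds[of a "k - 1"] block_code_bounds[of a 0]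
  unfolding code_step_def by (auto simp: less_imp_diff_less)

lemma sum_code_step: "(\<Sum>k<Suc \<beta>. code_step k a) = block_code a \<beta> + real (Suc \<beta>)"
  unfolding code_step_def by (induction \<beta>) auto

lemma leading_bit_bounds: "0 \<le> leading_bit e z \<and> leading_bit e z \<le> 1"
  by (simp add: leading_bit_def clip_bounds)

lemma leading_bit_bin_code:
  assumes "\<And>\<tau>. \<tau> < L \<Longrightarrow> f \<tau> \<in> {0, 1}" "e < L"
  shows "leading_bit e (bin_code f e (L - e)) = f e"
proof -
  have "L - e = Suc (L - Suc e)" using assms(2) by simp
  then show ?thesis
    unfolding leading_bit_def slope_def using assms by (simp only:) (rule clip_leading_bit_bin_code, auto)
qed

lemma shift_code_bin_code:
  assumes "\<And>\<tau>. \<tau> < L \<Longrightarrow> f \<tau> \<in> {0, 1}" "e \<le> L"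
  shows "shift_code e (bin_code f 0 L) = bin_code f e (L - e)"
  using assms(2)
proof (induction e)
  case (Suc e)
  then have "e < L" by simp
  have "shift_code (Suc e) (bin_code f 0 L) = 2 * bin_code f e (L - e) - f e"
    using Suc leading_bit_bin_code[of f e, OF assms(1) \<open>e < L\<close>] by simp
  also have "\<dots> = bin_code f (Suc e) (L - Suc e)"
  proof -
    have "L - e = Suc (L - Suc e)" using \<open>e < L\<close> by simp
    then show ?thesis by simp
  qed
  finally show ?case .
qed simp

lemma read_bit_of_nat:
  assumes "\<tau> < L"
  shows "read_bit y (real \<tau>) = leading_bit \<tau> (shift_code \<tau> y)"
proof -
  have "pick_bit e y (real \<tau>) = (if e = \<tau> then leading_bit \<tau> (shift_code \<tau> y) else 0)" for e
    using leading_bit_bounds[of e "shift_code e y"] by (auto simp: pick_bit_def relu_def)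
  then show ?thesis using assms by (simp add: read_bit_def)
qed

lemma decode_unit_interval:
  assumes D: "\<And>k. k < W \<Longrightarrow> 0 \<le> D k \<and> D k \<le> 2" and \<beta>: "\<beta> < W" and b: "real \<beta> \<le> b" "b \<le> real \<beta> + 1"
  shows "decode D b = (\<Sum>k<Suc \<beta>. D k) + (if Suc \<beta> < W then relu (D (Suc \<beta>) + 2 * (b - real (Suc \<beta>))) else 0) - b - 1"
proof -
  define T where "T k = relu (D k + 2 * (b - real k)) - 2 * relu (b - real k)" for k
  have T_low: "T k = D k" if "k < Suc \<beta>" for k
    using that D[of k] \<beta> b by (simp add: T_def relu_eq_self)
  have T_high: "T k = 0" if "Suc \<beta> < k" "k < W" for k
    using that D[of k] b by (simp add: T_def relu_eq_0)
  have T_next: "T (Suc \<beta>) = relu (D (Suc \<beta>) + 2 * (b - real (Suc \<beta>)))"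
    using b by (simp add: T_def relu_eq_0)
  have "(\<Sum>k<W. T k) = (\<Sum>k<Suc \<beta>. D k) + (if Suc \<beta> < W then T (Suc \<beta>) else 0)"
  proof (cases "Suc \<beta> < W")
    case True
    then show ?thesis
      using sum_lessThan_vanishing_above[OF True T_high] T_low by simp
  next
    case False
    with \<beta> have "W = Suc \<beta>" by simp
    with T_low show ?thesis by simp
  qed
  moreover have "decode D b = (\<Sum>k<W. T k) - relu b - 1"
    unfolding decode_def T_def by (simp add: sum_subtractf sum_distrib_left)
  moreover have "relu b = b" using b by (simp add: relu_eq_self)
  ultimately show ?thesis using T_next by simp
qed

lemma decode_of_nat:
  assumes "\<And>k. k < W \<Longrightarrow> 0 \<le> D k \<and> D k \<le> 2" "\<beta> < W"
  shows "decode D (real \<beta>) = (\<Sum>k<Suc \<beta>. D k) - real \<beta> - 1"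
  using decode_unit_interval[OF assms] assms(1)[of "Suc \<beta>"] by (simp add: relu_eq_0)

lemma block_pos_of_nat:
  assumes "a < M" "r < M"
  shows "block_pos (real (a * M + r)) = real (snake M a r)"
  unfolding block_pos_def using assms W_pos L_pos by (intro zigzag_of_nat) auto

lemma group_index_unit_interval:
  assumes "\<beta> < W" "\<rho> < L" "real (\<beta> * L + \<rho>) \<le> v" "v \<le> real (\<beta> * L + \<rho>) + 1"
  shows "group_index v = real \<beta> + (if \<rho> = L - 1 then v - real (\<beta> * L + \<rho>) else 0)"
  unfolding group_index_def using staircase_unit_interval[OF L_pos assms(2,1,3,4)] by simp

lemma group_index_of_nat:
  assumes "\<beta> < W" "\<rho> < L"
  shows "group_index (real (\<beta> * L + \<rho>)) = real \<beta>"
  using group_index_unit_interval[OF assms] by simp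

lemma bit_offset_of_nat:
  assumes "\<beta> < W" "\<rho> < L"
  shows "bit_offset (real (\<beta> * L + \<rho>)) = real (snake L \<beta> \<rho>)"
  unfolding bit_offset_def using assms L_pos by (intro zigzag_of_nat) auto

lemma sum_code_step_jump:
  assumes "a < M"
  shows "(\<Sum>j<a. code_step_jump k j) = code_step k a - code_step k 0"
proof -
  have "(\<Sum>j<a. code_step_jump k j) = (\<Sum>j<a. code_step k (Suc j) - code_step k j)"
    using assms by (intro sum.cong) (auto simp: code_step_jump_def)
  also have "\<dots> = code_step k a - code_step k 0" by (rule sum_lessThan_telescope)
  finally show ?thesis .
qed

lemma code_step_interp_unit_interval:
  assumes "a < M" "r < M" "real (a * M + r) \<le> x" "x \<le> real (a * M + r) + 1"
  shows "code_step_interp k x =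
    code_step k a + (if r = M - 1 then code_step_jump k a * (x - real (a * M + r)) else 0)"
  using staircase_unit_interval[of M r a M x "code_step_jump k"] assms W_pos L_pos sum_code_step_jump[OF assms(1)]
  unfolding code_step_interp_def by simp

lemma code_step_interp_of_nat:
  assumes "a < M" "r < M"
  shows "code_step_interp k (real (a * M + r)) = code_step k a"
  using code_step_interp_unit_interval[OF assms] by simp

lemma phi_of_nat:
  assumes "n < M * M"
  shows "phi (real n) = \<theta> n"
proof -
  obtain a r where n: "n = a * M + r" and a: "a < M" and r: "r < M"
    using assms by (rule less_mult_decomp)
  define w where "w = snake M a r"
  have "w < W * L" using r snake_less unfolding w_def by blast
  then obtain \<beta> \<rho> where w: "w = \<beta> * L + \<rho>" and \<beta>: "\<beta> < W" and \<rho>: "\<rho> < L"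
    by (rule less_mult_decomp)
  define \<tau> where "\<tau> = snake L \<beta> \<rho>"
  have \<tau>: "\<tau> < L" using \<rho> snake_less unfolding \<tau>_def by blast
  define f where "f = (\<lambda>\<tau>. \<theta> (bit_index a \<beta> \<tau>))"
  have f: "f t \<in> {0, 1}" if "t < L" for t
    unfolding f_def using bits bit_index_less[OF a \<beta> that] by blast
  have "decode (\<lambda>k. code_step k a) (real \<beta>) = block_code a \<beta>"
    using decode_of_nat[OF _ \<beta>] code_step_bounds[OF a] sum_code_step by simp
  then have "phi (real n) = read_bit (block_code a \<beta>) (real \<tau>)"
    unfolding phi_def read_block_def n code_step_interp_of_nat[OF a r] block_pos_of_nat[OF a r]
    unfolding w_def[symmetric] w group_index_of_nat[OF \<beta> \<rho>] bit_offset_of_nat[OF \<beta> \<rho>] \<tau>_def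
    by simp
  also have "\<dots> = f \<tau>"
    unfolding read_bit_of_nat[OF \<tau>] block_code_def f_def[symmetric]
    using shift_code_bin_code[OF f] leading_bit_bin_code[OF f \<tau>] \<tau> by simp
  also have "bit_index a \<beta> \<tau> = n"
  proof -
    have "snake M a (\<beta> * L + \<rho>) = r" using snake_snake[OF r, of a] unfolding w_def[symmetric] w .
    then show ?thesis unfolding bit_index_def \<tau>_def snake_snake[OF \<rho>] n by simp
  qed
  then have "f \<tau> = \<theta> n" unfolding f_def by simp
  finally show ?thesis .
qed

subsection \<open>Lipschitz continuity\<close>

lemma leading_bit_lipschitz: "\<bar>leading_bit e z - leading_bit e z'\<bar> \<le> slope e * \<bar>z - z'\<bar>"
proof -
  have "\<bar>leading_bit e z - leading_bit e z'\<bar> \<le> \<bar>slope e * (z - 1 / 2) - slope e * (z' - 1 / 2)\<bar>"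
    unfolding leading_bit_def using clip_lipschitz[of 1 "slope e * (z - 1 / 2) + 1 / 2" "slope e * (z' - 1 / 2) + 1 / 2"]
    by simp
  also have "\<dots> = slope e * \<bar>z - z'\<bar>"
    by (simp add: slope_def abs_mult flip: right_diff_distrib)
  finally show ?thesis .
qed

lemma shift_code_lipschitz: "\<bar>shift_code e y - shift_code e y'\<bar> \<le> (2 ^ (L + 1)) ^ e * \<bar>y - y'\<bar>"
proof (induction e)
  case (Suc e)
  let ?d = "\<bar>shift_code e y - shift_code e y'\<bar>"
  have "slope e \<le> 2 ^ L" unfolding slope_def by (intro power_increasing) auto
  moreover have "(2::real) \<le> 2 ^ L" using L_pos power_increasing[of 1 L "2::real"] by simp
  ultimately have slope: "2 + slope e \<le> 2 ^ (L + 1)" by simp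
  have "\<bar>shift_code (Suc e) y - shift_code (Suc e) y'\<bar>
      \<le> 2 * ?d + \<bar>leading_bit e (shift_code e y) - leading_bit e (shift_code e y')\<bar>"
    by (simp add: abs_if)
  also have "\<dots> \<le> (2 + slope e) * ?d"
    using leading_bit_lipschitz by (simp add: algebra_simps)
  also have "\<dots> \<le> 2 ^ (L + 1) * ((2 ^ (L + 1)) ^ e * \<bar>y - y'\<bar>)"
    using Suc slope by (intro mult_mono) auto
  finally show ?case by (simp add: algebra_simps)
qed simp

lemma read_bit_lipschitz_code:
  assumes "\<tau> < L"
  shows "\<bar>read_bit y (real \<tau>) - read_bit y' (real \<tau>)\<bar> \<le> 2 ^ (L * L) * \<bar>y - y'\<bar>"
proof -
  have "\<bar>read_bit y (real \<tau>) - read_bit y' (real \<tau>)\<bar> \<le> slope \<tau> * \<bar>shift_code \<tau> y - shift_code \<tau> y'\<bar>"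
    unfolding read_bit_of_nat[OF assms] by (rule leading_bit_lipschitz)
  also have "\<dots> \<le> slope \<tau> * ((2 ^ (L + 1)) ^ \<tau> * \<bar>y - y'\<bar>)"
    using shift_code_lipschitz by (intro mult_left_mono) (auto simp: slope_def)
  also have "\<dots> = 2 ^ (L - \<tau> + (L + 1) * \<tau>) * \<bar>y - y'\<bar>"
    unfolding slope_def by (simp add: power_add power_mult)
  also have "\<dots> \<le> 2 ^ (L * L) * \<bar>y - y'\<bar>"
  proof -
    have "L - \<tau> + (L + 1) * \<tau> = L * (\<tau> + 1)" using assms by (simp add: algebra_simps)
    also have "\<dots> \<le> L * L" using assms by (intro mult_le_mono2) auto
    finally show ?thesis by (intro mult_right_mono power_increasing) auto
  qed
  finally show ?thesis .
qed

lemma read_bit_lipschitz_offset: "\<bar>read_bit y t - read_bit y t'\<bar> \<le> real L * \<bar>t - t'\<bar>"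
proof -
  have pick: "\<bar>pick_bit e y t - pick_bit e y t'\<bar> \<le> \<bar>t - t'\<bar>" for e
  proof -
    let ?b = "leading_bit e (shift_code e y)"
    have "\<bar>pick_bit e y t - pick_bit e y t'\<bar> \<le> \<bar>(?b - \<bar>t - real e\<bar>) - (?b - \<bar>t' - real e\<bar>)\<bar>"
      unfolding pick_bit_def by (rule relu_lipschitz)
    also have "\<dots> \<le> \<bar>t - t'\<bar>"
      using abs_triangle_ineq3[of "t - real e" "t' - real e"] by (simp add: abs_minus_commute)
    finally show ?thesis .
  qed
  have "\<bar>read_bit y t - read_bit y t'\<bar> \<le> (\<Sum>e<L. \<bar>pick_bit e y t - pick_bit e y t'\<bar>)"
    unfolding read_bit_def sum_subtractf[symmetric] by (rule sum_abs)
  also have "\<dots> \<le> (\<Sum>e<L. \<bar>t - t'\<bar>)"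
    using pick by (intro sum_mono)
  finally show ?thesis by simp
qed

lemma decode_lipschitz_unit_interval:
  assumes D: "\<And>k. k < W \<Longrightarrow> 0 \<le> D k \<and> D k \<le> 2" and \<beta>: "\<beta> < W"
    and b: "real \<beta> \<le> b" "b \<le> real \<beta> + 1" "real \<beta> \<le> b'" "b' \<le> real \<beta> + 1"
  shows "\<bar>decode D b - decode D b'\<bar> \<le> \<bar>b - b'\<bar>"
proof (cases "Suc \<beta> < W")
  case True
  define c where "c = D (Suc \<beta>) - 2 * real (Suc \<beta>)"
  have "decode D u = (\<Sum>k<Suc \<beta>. D k) + (relu (c + 2 * u) - u) - 1" if "real \<beta> \<le> u" "u \<le> real \<beta> + 1" for u
    using decode_unit_interval[OF D \<beta> that] True by (simp add: c_def algebra_simps)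
  then show ?thesis using b relu_double_minus_lipschitz[of c b b'] by simp
next
  case False
  then show ?thesis using decode_unit_interval[OF D \<beta>] b by simp
qed

lemma read_block_lipschitz:
  assumes D: "\<And>k. k < W \<Longrightarrow> 0 \<le> D k \<and> D k \<le> 2" and \<omega>: "Suc \<omega> < M"
    and v: "real \<omega> \<le> v" "v \<le> real \<omega> + 1" "real \<omega> \<le> v'" "v' \<le> real \<omega> + 1"
  shows "\<bar>read_block D v - read_block D v'\<bar> \<le> 2 ^ (L * L) * \<bar>v - v'\<bar>"
proof -
  have "\<omega> < W * L" using \<omega> by simp
  then obtain \<beta> \<rho> where \<omega>_eq: "\<omega> = \<beta> * L + \<rho>" and \<beta>: "\<beta> < W" and \<rho>: "\<rho> < L"
    by (rule less_mult_decomp)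
  have group: "group_index u = real \<beta> + (if \<rho> = L - 1 then u - real \<omega> else 0)"
    if "real \<omega> \<le> u" "u \<le> real \<omega> + 1" for u
    using group_index_unit_interval[OF \<beta> \<rho>] that unfolding \<omega>_eq by simp
  have offset: "bit_offset u = real (snake L \<beta> \<rho>) + (if \<rho> = L - 1 then 0 else (-1) ^ \<beta> * (u - real \<omega>))"
    if "real \<omega> \<le> u" "u \<le> real \<omega> + 1" for u
    using zigzag_unit_interval[OF L_pos \<rho> \<beta>] that unfolding bit_offset_def \<omega>_eq by simp
  show ?thesis
  proof (cases "\<rho> = L - 1")
    case True
    have "bit_offset v = real (snake L \<beta> \<rho>)" "bit_offset v' = real (snake L \<beta> \<rho>)"
      using offset[OF v(1,2)] offset[OF v(3,4)] True by simp_all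
    then have "\<bar>read_block D v - read_block D v'\<bar>
        \<le> 2 ^ (L * L) * \<bar>decode D (group_index v) - decode D (group_index v')\<bar>"
      unfolding read_block_def by (simp add: read_bit_lipschitz_code snake_less \<rho>)
    also have "\<bar>decode D (group_index v) - decode D (group_index v')\<bar> \<le> \<bar>group_index v - group_index v'\<bar>"
      using group[OF v(1,2)] group[OF v(3,4)] True v by (intro decode_lipschitz_unit_interval[OF D \<beta>]) auto
    also have "\<bar>group_index v - group_index v'\<bar> = \<bar>v - v'\<bar>"
      using group[OF v(1,2)] group[OF v(3,4)] True by simp
    finally show ?thesis by simp
  next
    case False
    have "group_index v = real \<beta>" "group_index v' = real \<beta>"
      using group[OF v(1,2)] group[OF v(3,4)] False by simp_all
    then have "\<bar>read_block D v - read_block D v'\<bar> \<le> real L * \<bar>bit_offset v - bit_offset v'\<bar>"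
      unfolding read_block_def by (simp add: read_bit_lipschitz_offset)
    also have "\<bar>bit_offset v - bit_offset v'\<bar> = \<bar>v - v'\<bar>"
      using offset[OF v(1,2)] offset[OF v(3,4)] False by (simp add: abs_mult flip: right_diff_distrib)
    also note of_nat_le_two_pow_square
    finally show ?thesis by (simp add: mult_right_mono)
  qed
qed

lemma decode_code_step_interp:
  assumes a: "Suc a < M" and \<beta>: "\<beta> < W"
    and u: "real (a * M + (M - 1)) \<le> u" "u \<le> real (a * M + (M - 1)) + 1"
  shows "decode (\<lambda>k. code_step_interp k u) (real \<beta>) =
    block_code a \<beta> + (u - real (a * M + (M - 1))) * (block_code (Suc a) \<beta> - block_code a \<beta>)"
proof -
  define s where "s = u - real (a * M + (M - 1))"
  have s: "0 \<le> s" "s \<le> 1" using u unfolding s_def by auto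
  have interp: "code_step_interp k u = (1 - s) * code_step k a + s * code_step k (Suc a)" for k
    using code_step_interp_unit_interval[of a "M - 1" u k] a u W_pos L_pos
    by (simp add: code_step_jump_def s_def algebra_simps)
  have "0 \<le> code_step_interp k u \<and> code_step_interp k u \<le> 2" if "k < W" for k
  proof -
    have "0 \<le> code_step k a \<and> code_step k a \<le> 2" "0 \<le> code_step k (Suc a) \<and> code_step k (Suc a) \<le> 2"
      using code_step_bounds a that by simp_all
    moreover have "(1 - s) * code_step k a \<le> 2 - 2 * s" "s * code_step k (Suc a) \<le> 2 * s"
      using calculation s mult_left_mono[of "code_step k a" 2 "1 - s"] mult_left_mono[of "code_step k (Suc a)" 2 s]
      by (simp_all add: algebra_simps)
    ultimately have "0 \<le> (1 - s) * code_step k a" "0 \<le> s * code_step k (Suc a)"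
      "(1 - s) * code_step k a \<le> 2 - 2 * s" "s * code_step k (Suc a) \<le> 2 * s"
      using s by simp_all
    then show ?thesis unfolding interp by linarith
  qed
  then have "decode (\<lambda>k. code_step_interp k u) (real \<beta>) = (\<Sum>k<Suc \<beta>. code_step_interp k u) - real \<beta> - 1"
    by (rule decode_of_nat[OF _ \<beta>])
  also have "(\<Sum>k<Suc \<beta>. code_step_interp k u) =
      (1 - s) * (\<Sum>k<Suc \<beta>. code_step k a) + s * (\<Sum>k<Suc \<beta>. code_step k (Suc a))"
    unfolding interp sum.distrib sum_distrib_left by (simp only: mult.assoc)
  finally show ?thesis unfolding sum_code_step s_def[symmetric] by (simp add: algebra_simps)
qed

lemma phi_lipschitz_block_boundary:
  assumes a: "Suc a < M"
    and x: "real (a * M + (M - 1)) \<le> x" "x \<le> real (a * M + (M - 1)) + 1"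
    and y: "real (a * M + (M - 1)) \<le> y" "y \<le> real (a * M + (M - 1)) + 1"
  shows "\<bar>phi x - phi y\<bar> \<le> 2 ^ (L * L) * \<bar>x - y\<bar>"
proof -
  let ?m = "real (a * M + (M - 1))"
  define w where "w = snake M a (M - 1)"
  have "w < W * L" unfolding w_def using W_pos L_pos by (intro snake_less) simp
  then obtain \<beta> \<rho> where w: "w = \<beta> * L + \<rho>" and \<beta>: "\<beta> < W" and \<rho>: "\<rho> < L"
    by (rule less_mult_decomp)
  have "M - 1 < M" using W_pos L_pos by simp
  then have pos: "block_pos u = real w" if "?m \<le> u" "u \<le> ?m + 1" for u
    using zigzag_unit_interval[of M "M - 1" a M u] W_pos L_pos a that unfolding block_pos_def w_def by simp
  define \<Delta> where "\<Delta> = block_code (Suc a) \<beta> - block_code a \<beta>"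
  have phi: "phi u = read_bit (block_code a \<beta> + (u - ?m) * \<Delta>) (real (snake L \<beta> \<rho>))"
    if "?m \<le> u" "u \<le> ?m + 1" for u
    unfolding phi_def read_block_def pos[OF that] w group_index_of_nat[OF \<beta> \<rho>] bit_offset_of_nat[OF \<beta> \<rho>]
      decode_code_step_interp[OF a \<beta> that] \<Delta>_def ..
  have "\<bar>phi x - phi y\<bar>
      \<le> 2 ^ (L * L) * \<bar>(block_code a \<beta> + (x - ?m) * \<Delta>) - (block_code a \<beta> + (y - ?m) * \<Delta>)\<bar>"
    unfolding phi[OF x] phi[OF y] by (rule read_bit_lipschitz_code[OF snake_less[OF \<rho>]])
  also have "(block_code a \<beta> + (x - ?m) * \<Delta>) - (block_code a \<beta> + (y - ?m) * \<Delta>) = (x - y) * \<Delta>"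
    by (simp add: algebra_simps)
  also have "2 ^ (L * L) * \<bar>(x - y) * \<Delta>\<bar> \<le> 2 ^ (L * L) * \<bar>x - y\<bar>"
    using block_code_bounds[of a \<beta>] block_code_bounds[of "Suc a" \<beta>] a \<beta>
    by (intro mult_left_mono) (auto simp: abs_mult \<Delta>_def intro!: mult_left_le)
  finally show ?thesis .
qed

lemma phi_lipschitz_inside_block:
  assumes a: "a < M" and r: "Suc r < M"
    and x: "real (a * M + r) \<le> x" "x \<le> real (a * M + r) + 1"
    and y: "real (a * M + r) \<le> y" "y \<le> real (a * M + r) + 1"
  shows "\<bar>phi x - phi y\<bar> \<le> 2 ^ (L * L) * \<bar>x - y\<bar>"
proof -
  have r': "r < M" "r \<noteq> M - 1" using r by simp_all
  define \<omega> where "\<omega> = (if even a then r else M - 2 - r)"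
  have \<omega>: "Suc \<omega> < M" using r unfolding \<omega>_def by auto
  have pos: "block_pos u = real (snake M a r) + (-1) ^ a * (u - real (a * M + r))"
    if "real (a * M + r) \<le> u" "u \<le> real (a * M + r) + 1" for u
    using zigzag_unit_interval[of M r a M u] W_pos L_pos a r' that unfolding block_pos_def by simp
  have pos_range: "real \<omega> \<le> block_pos u \<and> block_pos u \<le> real \<omega> + 1"
    if "real (a * M + r) \<le> u" "u \<le> real (a * M + r) + 1" for u
    using pos[OF that] that r unfolding \<omega>_def snake_def by (auto simp: of_nat_diff)
  have "phi u = read_block (\<lambda>k. code_step k a) (block_pos u)"
    if "real (a * M + r) \<le> u" "u \<le> real (a * M + r) + 1" for u
    using code_step_interp_unit_interval[OF a r'(1) that] r'(2) unfolding phi_def by simp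
  then have "\<bar>phi x - phi y\<bar> \<le> 2 ^ (L * L) * \<bar>block_pos x - block_pos y\<bar>"
    using pos_range[OF x] pos_range[OF y] code_step_bounds[OF a] x y
    by (simp add: read_block_lipschitz[OF _ \<omega>])
  also have "\<bar>block_pos x - block_pos y\<bar> = \<bar>x - y\<bar>"
    using pos[OF x] pos[OF y] by (simp add: abs_mult flip: right_diff_distrib)
  finally show ?thesis .
qed

lemma phi_nonpos: "x \<le> 0 \<Longrightarrow> phi x = phi 0"
  using W_pos L_pos unfolding phi_def block_pos_def code_step_interp_def
  by (simp add: zigzag_nonpos staircase_nonpos)

lemma code_step_interp_beyond:
  assumes "real (M * M) - 1 \<le> x"
  shows "code_step_interp k x = code_step k (M - 1)"
proof -
  have "code_step_jump k j * ramp (x - real ((j + 1) * M)) = code_step_jump k j" if "j < M" for j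
  proof (cases "j + 1 < M")
    case True
    then have "(j + 2) * M \<le> M * M" by (intro mult_le_mono1) simp
    moreover have "(j + 2) * M = (j + 1) * M + M" by simp
    moreover have "1 \<le> M" using W_pos L_pos by simp
    ultimately have "(j + 1) * M + 1 \<le> M * M" by linarith
    then have "real ((j + 1) * M + 1) \<le> real (M * M)" by (simp only: of_nat_le_iff)
    then have "real ((j + 1) * M) \<le> x" using assms by (simp only: of_nat_add of_nat_1)
    then show ?thesis by (simp add: ramp_eq_1)
  qed (simp add: code_step_jump_def)
  then have "staircase M M (code_step_jump k) x = (\<Sum>j<M. code_step_jump k j)"
    unfolding staircase_def by (intro sum.cong) auto
  also have "\<dots> = (\<Sum>j<M - 1. code_step_jump k j)"
    using sum.lessThan_Suc[of "code_step_jump k" "M - 1"] W_pos L_pos by (simp add: code_step_jump_def)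
  also have "\<dots> = code_step k (M - 1) - code_step k 0"
    using W_pos L_pos by (intro sum_code_step_jump) simp
  finally show ?thesis unfolding code_step_interp_def by simp
qed

lemma phi_beyond:
  assumes "real (M * M) - 1 \<le> x" "real (M * M) - 1 \<le> y"
  shows "phi x = phi y"
  using assms W_pos L_pos unfolding phi_def block_pos_def
  by (simp add: zigzag_beyond code_step_interp_beyond)

lemma phi_lipschitz_unit_interval:
  fixes n :: int
  shows "(2 ^ (L * L))-lipschitz_on {real_of_int n..real_of_int n + 1} phi"
proof (rule lipschitz_onI)
  fix x y assume x: "x \<in> {real_of_int n..real_of_int n + 1}" and y: "y \<in> {real_of_int n..real_of_int n + 1}"
  have "\<bar>phi x - phi y\<bar> \<le> 2 ^ (L * L) * \<bar>x - y\<bar>"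
  proof (cases rule: int_cases_between[where n = n and N = "M * M"])
    case 1
    then have "real_of_int n \<le> -1" by simp
    with x y have "x \<le> 0" "y \<le> 0" by simp_all
    then have "phi x = phi y" using phi_nonpos by metis
    then show ?thesis by simp
  next
    case 2
    then have "real (M * M) - 1 \<le> real_of_int n" by linarith
    with x y have "phi x = phi y" by (intro phi_beyond) auto
    then show ?thesis by simp
  next
    case (3 m)
    then have "m < M * M" by simp
    then obtain a r where "m = a * M + r" and a: "a < M" and r: "r < M"
      by (rule less_mult_decomp)
    with 3 have n_eq: "real_of_int n = real (a * M + r)" by simp
    have x': "real (a * M + r) \<le> x" "x \<le> real (a * M + r) + 1"
      and y': "real (a * M + r) \<le> y" "y \<le> real (a * M + r) + 1"
      using x y unfolding n_eq by simp_all
    show ?thesis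
    proof (cases "r = M - 1")
      case True
      with 3 \<open>m = a * M + r\<close> have "Suc a * M < M * M" using W_pos L_pos by (simp add: algebra_simps)
      then have "Suc a < M" by (simp only: mult_less_cancel2)
      then show ?thesis using phi_lipschitz_block_boundary x' y' True by simp
    next
      case False
      with r have "Suc r < M" by simp
      then show ?thesis using phi_lipschitz_inside_block[OF a _ x' y'] by simp
    qed
  qed
  then show "dist (phi x) (phi y) \<le> 2 ^ (L * L) * dist x y" by (simp add: dist_real_def)
qed simp

lemma phi_lipschitz: "(2 ^ (L * L))-lipschitz_on UNIV phi"
  by (intro lipschitz_on_UNIV_if_unit_intervals phi_lipschitz_unit_interval) simp

subsection \<open>Realisation by a ReLU network\<close>

abbreviation acc_width :: nat where "acc_width \<equiv> 5 * W + 3"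

text \<open>Partial sums pass through the ReLU as their positive and negative parts; the knots stored in
  layer \<open>g\<close> are those of the \<open>W\<close> pieces that layer \<open>g + 1\<close> adds to them.\<close>

definition acc_layer :: "nat \<Rightarrow> real \<Rightarrow> nat \<Rightarrow> real" where
  "acc_layer g x i =
    (if i = 0 then relu x
     else if i = 1 then relu (zigzag M (g * W) x)
     else if i = 2 then relu (- zigzag M (g * W) x)
     else if i < 3 + W then relu (staircase M (g * W) (code_step_jump (i - 3)) x)
     else if i < 3 + 2 * W then relu (- staircase M (g * W) (code_step_jump (i - 3 - W)) x)
     else if i < 3 + 3 * W then relu (x - real ((g * W + (i - 3 - 2 * W)) * M))
     else if i < 3 + 4 * W then relu (x - (real ((g * W + (i - 3 - 3 * W) + 1) * M) - 1))
     else if i < 3 + 5 * W then relu (x - real ((g * W + (i - 3 - 4 * W) + 1) * M))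
     else 0)"

lemma acc_layer_cases:
  assumes "i < acc_width"
  obtains "i = 0" | "i = Suc 0" | "i = 2" | k where "k < W" "i = 3 + k" | k where "k < W" "i = 3 + W + k"
    | k where "k < W" "i = 3 + 2 * W + k" | k where "k < W" "i = 3 + 3 * W + k"
    | k where "k < W" "i = 3 + 4 * W + k"
proof -
  consider "i < 3" | "3 \<le> i" "i < 3 + W" | "3 + W \<le> i" "i < 3 + W + W" | "3 + 2 * W \<le> i" "i < 3 + 2 * W + W"
    | "3 + 3 * W \<le> i" "i < 3 + 3 * W + W" | "3 + 4 * W \<le> i" "i < 3 + 4 * W + W"
    using assms by linarith
  then show ?thesis
  proof cases
    case 1
    then have "i = 0 \<or> i = Suc 0 \<or> i = 2" by auto
    then show ?thesis using that(1-3) by blast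
  next
    case 2 then show ?thesis by (rule interval_offsetE[OF _ _ that(4)])
  next
    case 3 then show ?thesis by (rule interval_offsetE[OF _ _ that(5)])
  next
    case 4 then show ?thesis by (rule interval_offsetE[OF _ _ that(6)])
  next
    case 5 then show ?thesis by (rule interval_offsetE[OF _ _ that(7)])
  next
    case 6 then show ?thesis by (rule interval_offsetE[OF _ _ that(8)])
  qed
qed

lemma acc_layer_slots:
  "acc_layer g x 0 = relu x" "acc_layer g x (Suc 0) = relu (zigzag M (g * W) x)"
  "acc_layer g x 2 = relu (- zigzag M (g * W) x)"
  "k < W \<Longrightarrow> acc_layer g x (3 + k) = relu (staircase M (g * W) (code_step_jump k) x)"
  "k < W \<Longrightarrow> acc_layer g x (3 + W + k) = relu (- staircase M (g * W) (code_step_jump k) x)"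
  "k < W \<Longrightarrow> acc_layer g x (3 + 2 * W + k) = relu (x - real ((g * W + k) * M))"
  "k < W \<Longrightarrow> acc_layer g x (3 + 3 * W + k) = relu (x - (real ((g * W + k + 1) * M) - 1))"
  "k < W \<Longrightarrow> acc_layer g x (3 + 4 * W + k) = relu (x - real ((g * W + k + 1) * M))"
  "acc_width \<le> i \<Longrightarrow> acc_layer g x i = 0"
  by (simp_all add: acc_layer_def)

definition zigzag_row :: "nat \<Rightarrow> nat \<Rightarrow> real" where
  "zigzag_row g = (\<lambda>j. coord_row 1 1 j + coord_row 2 (-1) j
     + block_row (3 + 2 * W) W (\<lambda>u. (-1) ^ (g * W + u)) j + block_row (3 + 3 * W) W (\<lambda>u. - ((-1) ^ (g * W + u))) j)"

definition staircase_row :: "nat \<Rightarrow> nat \<Rightarrow> nat \<Rightarrow> real" where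
  "staircase_row g k = (\<lambda>j. coord_row (3 + k) 1 j + coord_row (3 + W + k) (-1) j
     + block_row (3 + 3 * W) W (\<lambda>u. code_step_jump k (g * W + u)) j
     + block_row (3 + 4 * W) W (\<lambda>u. - code_step_jump k (g * W + u)) j)"

lemma row_dot_zigzag_row: "row_dot acc_width (zigzag_row g) (acc_layer g x) = zigzag M (Suc g * W) x"
proof -
  have "row_dot acc_width (zigzag_row g) (acc_layer g x) = relu (zigzag M (g * W) x) - relu (- zigzag M (g * W) x)
      + (\<Sum>u<W. (-1) ^ (g * W + u) * relu (x - real ((g * W + u) * M)))
      + (\<Sum>u<W. - ((-1) ^ (g * W + u)) * relu (x - (real ((g * W + u + 1) * M) - 1)))"
    unfolding zigzag_row_def by (simp add: row_dot_add row_dot_coord_row row_dot_block_row acc_layer_slots)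
  also have "\<dots> = zigzag M (g * W + W) x"
    unfolding zigzag_add_pieces relu_minus_relu_neg add.assoc sum_mult_combine_diff ..
  finally show ?thesis by (simp add: add.commute)
qed

lemma row_dot_staircase_row:
  assumes "k < W"
  shows "row_dot acc_width (staircase_row g k) (acc_layer g x) = staircase M (Suc g * W) (code_step_jump k) x"
proof -
  have "row_dot acc_width (staircase_row g k) (acc_layer g x) =
      relu (staircase M (g * W) (code_step_jump k) x) - relu (- staircase M (g * W) (code_step_jump k) x)
      + (\<Sum>u<W. code_step_jump k (g * W + u) * relu (x - (real ((g * W + u + 1) * M) - 1)))
      + (\<Sum>u<W. - code_step_jump k (g * W + u) * relu (x - real ((g * W + u + 1) * M)))"
    unfolding staircase_row_def using assms
    by (simp add: row_dot_add row_dot_coord_row row_dot_block_row acc_layer_slots)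
  also have "\<dots> = staircase M (g * W + W) (code_step_jump k) x"
    unfolding staircase_add_pieces relu_minus_relu_neg add.assoc sum_mult_combine_diff ..
  finally show ?thesis by (simp add: add.commute)
qed

definition input_weights :: "nat \<Rightarrow> nat \<Rightarrow> real" where
  "input_weights i = (if i = 0 \<or> 3 + 2 * W \<le> i then coord_row 0 1 else (\<lambda>_. 0))"

definition acc_weights :: "nat \<Rightarrow> nat \<Rightarrow> nat \<Rightarrow> real" where
  "acc_weights g i =
    (if i = 1 then zigzag_row g else if i = 2 then (\<lambda>j. - zigzag_row g j)
     else if 3 \<le> i \<and> i < 3 + W then staircase_row g (i - 3)
     else if 3 + W \<le> i \<and> i < 3 + 2 * W then (\<lambda>j. - staircase_row g (i - 3 - W) j)
     else coord_row 0 1)"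

definition acc_bias :: "nat \<Rightarrow> nat \<Rightarrow> real" where
  "acc_bias g i =
    (if i < 3 + 2 * W then 0
     else if i < 3 + 3 * W then - real ((g * W + (i - 3 - 2 * W)) * M)
     else if i < 3 + 4 * W then - (real ((g * W + (i - 3 - 3 * W) + 1) * M) - 1)
     else - real ((g * W + (i - 3 - 4 * W) + 1) * M))"

lemma acc_weights_slots:
  "acc_weights g 0 = coord_row 0 1" "acc_weights g (Suc 0) = zigzag_row g" "acc_weights g 2 = (\<lambda>j. - zigzag_row g j)"
  "k < W \<Longrightarrow> acc_weights g (3 + k) = staircase_row g k"
  "k < W \<Longrightarrow> acc_weights g (3 + W + k) = (\<lambda>j. - staircase_row g k j)"
  "k < W \<Longrightarrow> acc_weights g (3 + 2 * W + k) = coord_row 0 1"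
  "k < W \<Longrightarrow> acc_weights g (3 + 3 * W + k) = coord_row 0 1"
  "k < W \<Longrightarrow> acc_weights g (3 + 4 * W + k) = coord_row 0 1"
  by (simp_all add: acc_weights_def)

lemma input_weights_slots:
  "input_weights 0 = coord_row 0 1" "input_weights (Suc 0) = (\<lambda>_. 0)" "input_weights 2 = (\<lambda>_. 0)"
  "k < W \<Longrightarrow> input_weights (3 + k) = (\<lambda>_. 0)"
  "k < W \<Longrightarrow> input_weights (3 + W + k) = (\<lambda>_. 0)"
  "input_weights (3 + 2 * W + k) = coord_row 0 1"
  "input_weights (3 + 3 * W + k) = coord_row 0 1"
  "input_weights (3 + 4 * W + k) = coord_row 0 1"
  by (simp_all add: input_weights_def)

lemma acc_bias_slots:
  "i < 3 + 2 * W \<Longrightarrow> acc_bias g i = 0"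
  "k < W \<Longrightarrow> acc_bias g (3 + 2 * W + k) = - real ((g * W + k) * M)"
  "k < W \<Longrightarrow> acc_bias g (3 + 3 * W + k) = - (real ((g * W + k + 1) * M) - 1)"
  "k < W \<Longrightarrow> acc_bias g (3 + 4 * W + k) = - real ((g * W + k + 1) * M)"
  by (simp_all add: acc_bias_def)

lemma knot_nonneg: "0 \<le> real ((j + 1) * M) - 1"
proof -
  have "1 \<le> M" using W_pos L_pos by simp
  also have "M \<le> (j + 1) * M" by simp
  finally have "1 \<le> (j + 1) * M" .
  then show ?thesis by (simp only: of_nat_le_iff[symmetric] of_nat_1)
qed

lemma relu_acc_layer_input_shift:
  assumes "0 \<le> c"
  shows "relu (row_dot acc_width (coord_row 0 1) (acc_layer g x) + - c) = relu (x - c)"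
  using assms by (simp add: row_dot_coord_row acc_layer_slots relu_relu_diff)

lemma acc_layer_first: "relu_vec (aff_map input_weights (acc_bias 0) 1 acc_width (\<lambda>_. x)) = acc_layer 0 x"
proof (rule relu_vec_aff_map_eqI)
  fix i assume "i < acc_width"
  then show "relu (row_dot 1 (input_weights i) (\<lambda>_. x) + acc_bias 0 i) = acc_layer 0 x i"
    by (cases rule: acc_layer_cases) (simp_all only: input_weights_slots acc_bias_slots acc_layer_slots,
        simp_all add: row_dot_one coord_row_def zigzag_def staircase_def relu_0 algebra_simps)
qed (simp add: acc_layer_slots)

lemma acc_layer_Suc:
  "relu_vec (aff_map (acc_weights g) (acc_bias (Suc g)) acc_width acc_width (acc_layer g x)) = acc_layer (Suc g) x"
proof (rule relu_vec_aff_map_eqI)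
  fix i assume "i < acc_width"
  then show "relu (row_dot acc_width (acc_weights g i) (acc_layer g x) + acc_bias (Suc g) i) = acc_layer (Suc g) x i"
  proof (cases rule: acc_layer_cases)
    case 1
    then show ?thesis by (simp add: acc_weights_slots acc_bias_slots acc_layer_slots row_dot_coord_row relu_relu)
  next
    case 2
    then show ?thesis by (simp add: acc_weights_slots acc_bias_slots acc_layer_slots row_dot_zigzag_row)
  next
    case 3
    then show ?thesis by (simp add: acc_weights_slots acc_bias_slots acc_layer_slots row_dot_zigzag_row row_dot_minus)
  next
    case (4 k)
    then show ?thesis by (simp add: acc_weights_slots acc_bias_slots acc_layer_slots row_dot_staircase_row)
  next
    case (5 k)
    then show ?thesis
      by (simp add: acc_weights_slots acc_bias_slots acc_layer_slots row_dot_staircase_row row_dot_minus)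
  qed (simp_all only: acc_weights_slots acc_bias_slots acc_layer_slots relu_acc_layer_input_shift
      of_nat_0_le_iff knot_nonneg)
qed (simp add: acc_layer_slots)

definition split_layer :: "real \<Rightarrow> nat \<Rightarrow> real" where
  "split_layer x i =
    (if i < W then relu (code_step_interp i x)
     else if i < 2 * W then relu (- code_step_interp (i - W) x)
     else if i < 3 * W then relu (block_pos x - real ((i - 2 * W) * L))
     else if i < 4 * W then relu (block_pos x - (real ((i - 3 * W + 1) * L) - 1))
     else if i < 5 * W then relu (block_pos x - real ((i - 4 * W + 1) * L))
     else 0)"

lemma split_layer_cases:
  assumes "i < 5 * W"
  obtains k where "k < W" "i = k" | k where "k < W" "i = W + k" | k where "k < W" "i = 2 * W + k"
    | k where "k < W" "i = 3 * W + k" | k where "k < W" "i = 4 * W + k"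
proof -
  consider "i < W" | "W \<le> i" "i < W + W" | "2 * W \<le> i" "i < 2 * W + W" | "3 * W \<le> i" "i < 3 * W + W"
    | "4 * W \<le> i" "i < 4 * W + W"
    using assms by linarith
  then show ?thesis
  proof cases
    case 1 then show ?thesis using that(1)[of i] by simp
  next
    case 2 then show ?thesis by (rule interval_offsetE[OF _ _ that(2)])
  next
    case 3 then show ?thesis by (rule interval_offsetE[OF _ _ that(3)])
  next
    case 4 then show ?thesis by (rule interval_offsetE[OF _ _ that(4)])
  next
    case 5 then show ?thesis by (rule interval_offsetE[OF _ _ that(5)])
  qed
qed

lemma split_layer_slots:
  "k < W \<Longrightarrow> split_layer x k = relu (code_step_interp k x)"
  "k < W \<Longrightarrow> split_layer x (W + k) = relu (- code_step_interp k x)"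
  "k < W \<Longrightarrow> split_layer x (2 * W + k) = relu (block_pos x - real (k * L))"
  "k < W \<Longrightarrow> split_layer x (3 * W + k) = relu (block_pos x - (real ((k + 1) * L) - 1))"
  "k < W \<Longrightarrow> split_layer x (4 * W + k) = relu (block_pos x - real ((k + 1) * L))"
  "5 * W \<le> i \<Longrightarrow> split_layer x i = 0"
  by (simp_all add: split_layer_def)

definition split_weights :: "nat \<Rightarrow> nat \<Rightarrow> nat \<Rightarrow> real" where
  "split_weights g i =
    (if i < W then staircase_row g i else if i < 2 * W then (\<lambda>j. - staircase_row g (i - W) j)
     else zigzag_row g)"

definition split_bias :: "nat \<Rightarrow> real" where
  "split_bias i =
    (if i < W then code_step i 0 else if i < 2 * W then - code_step (i - W) 0
     else if i < 3 * W then - real ((i - 2 * W) * L)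
     else if i < 4 * W then - (real ((i - 3 * W + 1) * L) - 1)
     else - real ((i - 4 * W + 1) * L))"

lemma last_acc_layer:
  assumes "Suc g = L"
  shows "row_dot acc_width (zigzag_row g) (acc_layer g x) = block_pos x"
    "k < W \<Longrightarrow> code_step k 0 + row_dot acc_width (staircase_row g k) (acc_layer g x) = code_step_interp k x"
proof -
  have gW: "Suc g * W = M" using assms by (simp add: mult.commute)
  show "row_dot acc_width (zigzag_row g) (acc_layer g x) = block_pos x"
    unfolding row_dot_zigzag_row gW block_pos_def ..
  show "k < W \<Longrightarrow> code_step k 0 + row_dot acc_width (staircase_row g k) (acc_layer g x) = code_step_interp k x"
    unfolding row_dot_staircase_row gW code_step_interp_def ..
qed

lemma split_layer_eq:
  assumes "Suc g = L"
  shows "relu_vec (aff_map (split_weights g) split_bias acc_width (5 * W) (acc_layer g x)) = split_layer x"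
proof (rule relu_vec_aff_map_eqI)
  fix i assume "i < 5 * W"
  note last = last_acc_layer[OF assms, where x = x]
  from \<open>i < 5 * W\<close>
  show "relu (row_dot acc_width (split_weights g i) (acc_layer g x) + split_bias i) = split_layer x i"
  proof (cases rule: split_layer_cases)
    case (1 k)
    then show ?thesis using last(2)[of k] by (simp add: split_weights_def split_bias_def split_layer_slots add.commute)
  next
    case (2 k)
    have "row_dot acc_width (split_weights g i) (acc_layer g x) + split_bias i = - code_step_interp k x"
      using 2 last(2)[of k] by (simp add: split_weights_def split_bias_def row_dot_minus)
    with 2 show ?thesis by (simp add: split_layer_slots)
  next
    case (3 k)
    then show ?thesis using last(1) by (simp add: split_weights_def split_bias_def split_layer_slots)
  next
    case (4 k)
    then show ?thesis using last(1) split_layer_slots(4)[of k x]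
      by (simp add: split_weights_def split_bias_def algebra_simps)
  next
    case (5 k)
    then show ?thesis using last(1) split_layer_slots(5)[of k x]
      by (simp add: split_weights_def split_bias_def algebra_simps)
  qed
qed (simp add: split_layer_slots)

definition code_of :: "real \<Rightarrow> real" where
  "code_of x = decode (\<lambda>k. code_step_interp k x) (group_index (block_pos x))"

definition offset_of :: "real \<Rightarrow> real" where
  "offset_of x = bit_offset (block_pos x)"

lemma phi_eq_read_bit: "phi x = read_bit (code_of x) (offset_of x)"
  by (simp add: phi_def read_block_def code_of_def offset_of_def)

definition decode_layer :: "real \<Rightarrow> nat \<Rightarrow> real" where
  "decode_layer x i =
    (if i = 0 then relu (offset_of x) else if i = 1 then relu (- offset_of x)
     else if i < 2 + W then relu (code_step_interp (i - 2) x + 2 * (group_index (block_pos x) - real (i - 2)))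
     else if i < 2 + 2 * W then relu (group_index (block_pos x) - real (i - 2 - W))
     else 0)"

lemma decode_layer_cases:
  assumes "i < 2 * W + 2"
  obtains "i = 0" | "i = Suc 0" | k where "k < W" "i = 2 + k" | k where "k < W" "i = 2 + W + k"
proof -
  consider "i < 2" | "2 \<le> i" "i < 2 + W" | "2 + W \<le> i" "i < 2 + W + W"
    using assms by linarith
  then show ?thesis
  proof cases
    case 1
    then have "i = 0 \<or> i = Suc 0" by auto
    then show ?thesis using that(1,2) by blast
  next
    case 2 then show ?thesis by (rule interval_offsetE[OF _ _ that(3)])
  next
    case 3 then show ?thesis by (rule interval_offsetE[OF _ _ that(4)])
  qed
qed

lemma decode_layer_slots:
  "decode_layer x 0 = relu (offset_of x)" "decode_layer x (Suc 0) = relu (- offset_of x)"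
  "k < W \<Longrightarrow> decode_layer x (2 + k) = relu (code_step_interp k x + 2 * (group_index (block_pos x) - real k))"
  "k < W \<Longrightarrow> decode_layer x (2 + W + k) = relu (group_index (block_pos x) - real k)"
  "2 * W + 2 \<le> i \<Longrightarrow> decode_layer x i = 0"
  by (simp_all add: decode_layer_def)

definition offset_row :: "nat \<Rightarrow> real" where
  "offset_row = (\<lambda>j. block_row (2 * W) W (\<lambda>u. (-1) ^ u) j + block_row (3 * W) W (\<lambda>u. - ((-1) ^ u)) j)"

definition group_row :: "nat \<Rightarrow> real" where
  "group_row = (\<lambda>j. block_row (3 * W) W (\<lambda>_. 1) j + block_row (4 * W) W (\<lambda>_. -1) j)"

definition interp_row :: "nat \<Rightarrow> nat \<Rightarrow> real" where
  "interp_row k = (\<lambda>j. coord_row k 1 j + coord_row (W + k) (-1) j)"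

lemma row_dot_offset_row: "row_dot (5 * W) offset_row (split_layer x) = offset_of x"
proof -
  have "row_dot (5 * W) offset_row (split_layer x) =
      (\<Sum>u<W. (-1) ^ u * relu (block_pos x - real (u * L)))
      + (\<Sum>u<W. - ((-1) ^ u) * relu (block_pos x - (real ((u + 1) * L) - 1)))"
    unfolding offset_row_def by (simp add: row_dot_add row_dot_block_row split_layer_slots)
  also have "\<dots> = zigzag L (0 + W) (block_pos x)"
    unfolding zigzag_add_pieces sum_mult_combine_diff by (simp add: zigzag_def)
  finally show ?thesis by (simp add: offset_of_def bit_offset_def)
qed

lemma row_dot_group_row: "row_dot (5 * W) group_row (split_layer x) = group_index (block_pos x)"
proof -
  have "row_dot (5 * W) group_row (split_layer x) =
      (\<Sum>u<W. 1 * relu (block_pos x - (real ((u + 1) * L) - 1)))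
      + (\<Sum>u<W. - 1 * relu (block_pos x - real ((u + 1) * L)))"
    unfolding group_row_def by (simp add: row_dot_add row_dot_block_row split_layer_slots)
  also have "\<dots> = staircase L (0 + W) (\<lambda>_. 1) (block_pos x)"
    unfolding staircase_add_pieces sum_mult_combine_diff by (simp add: staircase_def)
  finally show ?thesis by (simp add: group_index_def)
qed

lemma row_dot_interp_row: "k < W \<Longrightarrow> row_dot (5 * W) (interp_row k) (split_layer x) = code_step_interp k x"
  unfolding interp_row_def by (simp add: row_dot_add row_dot_coord_row split_layer_slots relu_minus_relu_neg)

definition decode_weights :: "nat \<Rightarrow> nat \<Rightarrow> real" where
  "decode_weights i =
    (if i = 0 then offset_row else if i = 1 then (\<lambda>j. - offset_row j)
     else if i < 2 + W then (\<lambda>j. interp_row (i - 2) j + 2 * group_row j) else group_row)"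

definition decode_bias :: "nat \<Rightarrow> real" where
  "decode_bias i = (if i < 2 then 0 else if i < 2 + W then - 2 * real (i - 2) else - real (i - 2 - W))"

lemma decode_layer_eq: "relu_vec (aff_map decode_weights decode_bias (5 * W) (2 * W + 2) (split_layer x)) = decode_layer x"
proof (rule relu_vec_aff_map_eqI)
  fix i assume "i < 2 * W + 2"
  then show "relu (row_dot (5 * W) (decode_weights i) (split_layer x) + decode_bias i) = decode_layer x i"
  proof (cases rule: decode_layer_cases)
    case (3 k)
    then have "row_dot (5 * W) (decode_weights i) (split_layer x) + decode_bias i =
        code_step_interp k x + 2 * (group_index (block_pos x) - real k)"
      by (simp add: decode_weights_def decode_bias_def row_dot_add row_dot_scale row_dot_interp_row
          row_dot_group_row right_diff_distrib)
    with 3 show ?thesis using decode_layer_slots(3)[of k x] by simp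
  next
    case (4 k)
    then show ?thesis using decode_layer_slots(4)[of k x]
      by (simp add: decode_weights_def decode_bias_def row_dot_group_row)
  qed (simp_all add: decode_weights_def decode_bias_def decode_layer_slots row_dot_minus row_dot_offset_row
      row_dot_group_row)
qed (simp add: decode_layer_slots)

text \<open>Slots \<open>4\<close> and \<open>9\<close> of the \<open>e\<close>-th extraction layer lag one step behind: they hold the bits
  picked at the steps before \<open>e - 1\<close> and at step \<open>e - 1\<close>; both vanish for \<open>e = 0\<close>.\<close>

definition extract_layer :: "nat \<Rightarrow> real \<Rightarrow> nat \<Rightarrow> real" where
  "extract_layer e x i =
    (if i = 0 then relu (offset_of x) else if i = 1 then relu (- offset_of x)
     else if i = 2 then relu (shift_code e (code_of x)) else if i = 3 then relu (- shift_code e (code_of x))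
     else if i = 4 then (\<Sum>j<e - 1. pick_bit j (code_of x) (offset_of x))
     else if i = 5 then relu (slope e * (shift_code e (code_of x) - 1 / 2) + 1 / 2)
     else if i = 6 then relu (slope e * (shift_code e (code_of x) - 1 / 2) - 1 / 2)
     else if i = 7 then relu (offset_of x - real e) else if i = 8 then relu (real e - offset_of x)
     else if i = 9 then (if e = 0 then 0 else pick_bit (e - 1) (code_of x) (offset_of x))
     else 0)"

definition posneg_row :: "nat \<Rightarrow> real" where
  "posneg_row = (\<lambda>j. coord_row 0 1 j + coord_row 1 (-1) j)"

definition decoded_row :: "nat \<Rightarrow> real" where
  "decoded_row = (\<lambda>j. block_row 2 W (\<lambda>_. 1) j + block_row (2 + W) W (\<lambda>_. -2) j + coord_row (2 + W) (-1) j)"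

definition shift_row :: "nat \<Rightarrow> real" where
  "shift_row = (\<lambda>j. coord_row 2 2 j + coord_row 3 (-2) j + coord_row 5 (-1) j + coord_row 6 1 j)"

definition sum_row :: "nat \<Rightarrow> real" where
  "sum_row = (\<lambda>j. coord_row 4 1 j + coord_row 9 1 j)"

definition pick_row :: "nat \<Rightarrow> real" where
  "pick_row = (\<lambda>j. coord_row 5 1 j + coord_row 6 (-1) j + coord_row 7 (-1) j + coord_row 8 (-1) j)"

lemma row_dot_posneg_row: "2 \<le> d \<Longrightarrow> row_dot d posneg_row h = h 0 - h 1"
  unfolding posneg_row_def by (simp add: row_dot_add row_dot_coord_row)

lemma row_dot_decoded_row: "row_dot (2 * W + 2) decoded_row (decode_layer x) = code_of x + 1"
proof -
  have "row_dot (2 * W + 2) decoded_row (decode_layer x) =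
      (\<Sum>u<W. 1 * relu (code_step_interp u x + 2 * (group_index (block_pos x) - real u)))
      + (\<Sum>u<W. -2 * relu (group_index (block_pos x) - real u)) - relu (group_index (block_pos x))"
    unfolding decoded_row_def using W_pos
    by (simp add: row_dot_add row_dot_block_row row_dot_coord_row decode_layer_def)
  then show ?thesis
    by (simp add: code_of_def decode_def sum_distrib_left sum_negf)
qed

definition extract_weights_first :: "nat \<Rightarrow> nat \<Rightarrow> real" where
  "extract_weights_first i =
    (if i = 0 \<or> i = 7 then posneg_row else if i = 1 \<or> i = 8 then (\<lambda>j. - posneg_row j)
     else if i = 2 then decoded_row else if i = 3 then (\<lambda>j. - decoded_row j)
     else if i = 5 \<or> i = 6 then (\<lambda>j. slope 0 * decoded_row j) else (\<lambda>_. 0))"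

definition extract_bias_first :: "nat \<Rightarrow> real" where
  "extract_bias_first i =
    (if i = 2 then -1 else if i = 3 then 1 else if i = 5 then - slope 0 * (3 / 2) + 1 / 2
     else if i = 6 then - slope 0 * (3 / 2) - 1 / 2 else 0)"

lemma extract_layer_first:
  "relu_vec (aff_map extract_weights_first extract_bias_first (2 * W + 2) 10 (decode_layer x)) = extract_layer 0 x"
proof (rule relu_vec_aff_map_eqI)
  fix i :: nat assume "i < 10"
  have t: "row_dot (2 * W + 2) posneg_row (decode_layer x) = offset_of x"
    by (simp add: row_dot_posneg_row decode_layer_slots relu_minus_relu_neg)
  have "row_dot (2 * W + 2) (extract_weights_first i) (decode_layer x) + extract_bias_first i =
    (if i = 0 then offset_of x else if i = 1 then - offset_of x else if i = 2 then code_of x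
     else if i = 3 then - code_of x else if i = 5 then slope 0 * (code_of x - 1 / 2) + 1 / 2
     else if i = 6 then slope 0 * (code_of x - 1 / 2) - 1 / 2
     else if i = 7 then offset_of x else if i = 8 then - offset_of x else 0)"
    using less_10_cases[OF \<open>i < 10\<close>] t row_dot_decoded_row[of x] row_dot_scale[of "2 * W + 2" "slope 0"]
    by (auto simp: extract_weights_first_def extract_bias_first_def row_dot_minus row_dot_zero algebra_simps)
  then show "relu (row_dot (2 * W + 2) (extract_weights_first i) (decode_layer x) + extract_bias_first i) =
      extract_layer 0 x i"
    using less_10_cases[OF \<open>i < 10\<close>] by (auto simp: extract_layer_def relu_0)
qed (simp add: extract_layer_def)

definition extract_weights :: "nat \<Rightarrow> nat \<Rightarrow> nat \<Rightarrow> real" where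
  "extract_weights e i =
    (if i = 0 \<or> i = 7 then posneg_row else if i = 1 \<or> i = 8 then (\<lambda>j. - posneg_row j)
     else if i = 2 then shift_row else if i = 3 then (\<lambda>j. - shift_row j) else if i = 4 then sum_row
     else if i = 5 \<or> i = 6 then (\<lambda>j. slope (Suc e) * shift_row j) else if i = 9 then pick_row else (\<lambda>_. 0))"

definition extract_bias :: "nat \<Rightarrow> nat \<Rightarrow> real" where
  "extract_bias e i =
    (if i = 5 then - slope (Suc e) / 2 + 1 / 2 else if i = 6 then - slope (Suc e) / 2 - 1 / 2
     else if i = 7 then - real (Suc e) else if i = 8 then real (Suc e) else 0)"

lemma pick_bit_nonneg: "0 \<le> pick_bit e y t"
  by (simp add: pick_bit_def relu_def)

lemma row_dot_shift_row: "row_dot 10 shift_row (extract_layer e x) = shift_code (Suc e) (code_of x)"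
proof -
  let ?z = "shift_code e (code_of x)"
  have "row_dot 10 shift_row (extract_layer e x) = 2 * (relu ?z - relu (- ?z)) - leading_bit e ?z"
    unfolding shift_row_def leading_bit_def clip_def
    by (simp add: row_dot_add row_dot_coord_row extract_layer_def algebra_simps)
  then show ?thesis by (simp add: relu_minus_relu_neg)
qed

lemma row_dot_sum_row: "row_dot 10 sum_row (extract_layer e x) = (\<Sum>j<e. pick_bit j (code_of x) (offset_of x))"
  unfolding sum_row_def by (cases e) (simp_all add: row_dot_add row_dot_coord_row extract_layer_def)

lemma relu_row_dot_pick_row: "relu (row_dot 10 pick_row (extract_layer e x)) = pick_bit e (code_of x) (offset_of x)"
proof -
  let ?t = "offset_of x"
  have "row_dot 10 pick_row (extract_layer e x) =
      leading_bit e (shift_code e (code_of x)) - (relu (?t - real e) + relu (- (?t - real e)))"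
    unfolding pick_row_def leading_bit_def clip_def
    by (simp add: row_dot_add row_dot_coord_row extract_layer_def algebra_simps)
  moreover have "relu (?t - real e) + relu (real e - ?t) = \<bar>?t - real e\<bar>" by (simp add: relu_def)
  ultimately show ?thesis by (simp add: pick_bit_def)
qed

lemma extract_layer_Suc:
  "relu_vec (aff_map (extract_weights e) (extract_bias e) 10 10 (extract_layer e x)) = extract_layer (Suc e) x"
proof (rule relu_vec_aff_map_eqI)
  fix i :: nat assume "i < 10"
  let ?z = "shift_code (Suc e) (code_of x)" and ?t = "offset_of x"
  have t: "row_dot 10 posneg_row (extract_layer e x) = ?t"
    by (simp add: row_dot_posneg_row extract_layer_def relu_minus_relu_neg)
  have "i \<noteq> 9 \<Longrightarrow> row_dot 10 (extract_weights e i) (extract_layer e x) + extract_bias e i =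
    (if i = 0 then ?t else if i = 1 then - ?t else if i = 2 then ?z else if i = 3 then - ?z
     else if i = 4 then (\<Sum>j<e. pick_bit j (code_of x) ?t)
     else if i = 5 then slope (Suc e) * (?z - 1 / 2) + 1 / 2 else if i = 6 then slope (Suc e) * (?z - 1 / 2) - 1 / 2
     else if i = 7 then ?t - real (Suc e) else if i = 8 then real (Suc e) - ?t else 0)"
    using less_10_cases[OF \<open>i < 10\<close>]
    by (auto simp: extract_weights_def extract_bias_def row_dot_minus row_dot_scale row_dot_zero t
        row_dot_shift_row row_dot_sum_row right_diff_distrib)
  then show "relu (row_dot 10 (extract_weights e i) (extract_layer e x) + extract_bias e i) = extract_layer (Suc e) x i"
    using less_10_cases[OF \<open>i < 10\<close>] relu_row_dot_pick_row[of e x]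
    by (auto simp: extract_layer_def relu_eq_self sum_nonneg pick_bit_nonneg
        extract_weights_def[of e 9] extract_bias_def[of e 9])
qed (simp add: extract_layer_def)

lemma output_eq_phi: "aff_map (\<lambda>_. sum_row) (\<lambda>_. 0) 10 1 (extract_layer L x) 0 = phi x"
  by (simp add: aff_map_def row_dot_def[symmetric] row_dot_sum_row phi_eq_read_bit read_bit_def)

lemma phi_in_NN:
  assumes "2 \<le> L"
  shows "phi \<in> NN (8 * W + 4) (4 * L)"
proof -
  let ?Wd = "8 * W + 4"
  have acc: "hidden_layers ?Wd (Suc g) acc_width (acc_layer g)" for g
  proof (induction g)
    case 0
    show ?case using hidden_layers_first[OF _ acc_layer_first] by simp
  next
    case (Suc g)
    then show ?case by (rule hidden_layers_snoc[OF _ _ acc_layer_Suc]) simp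
  qed
  have "Suc (L - 1) = L" using L_pos by simp
  then have "hidden_layers ?Wd (Suc L) (5 * W) split_layer"
    using acc[of "L - 1"] by (intro hidden_layers_snoc[OF _ _ split_layer_eq]) simp_all
  then have "hidden_layers ?Wd (Suc (Suc L)) (2 * W + 2) decode_layer"
    by (rule hidden_layers_snoc[OF _ _ decode_layer_eq]) simp
  then have extract_0: "hidden_layers ?Wd (Suc (Suc (Suc L))) 10 (extract_layer 0)"
    by (rule hidden_layers_snoc[OF _ _ extract_layer_first]) (use W_pos in linarith)
  have "hidden_layers ?Wd (Suc (Suc (Suc L)) + e) 10 (extract_layer e)" for e
  proof (induction e)
    case (Suc e)
    have "hidden_layers ?Wd (Suc (Suc (Suc (Suc L)) + e)) 10 (extract_layer (Suc e))"
      by (rule hidden_layers_snoc[OF Suc.IH _ extract_layer_Suc]) (use W_pos in linarith)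
    then show ?case by simp
  qed (simp add: extract_0)
  then show ?thesis
    using assms by (intro NN_if_hidden_layers[OF _ _ output_eq_phi]) auto
qed

end

theorem lemma30:
  fixes W L :: nat and \<theta> :: "nat \<Rightarrow> real"
  assumes "W \<ge> 6" and "L \<ge> 2"
    and "\<forall>i < W^2 * L^2. \<theta> i \<in> {0, 1}"
  shows "\<exists>\<phi> \<in> NN (8 * W + 4) (4 * L).
           (\<forall>i < W^2 * L^2. \<phi> (real i) = \<theta> i) \<and>
           (2 * 2 ^ (L^2) + real (L^2))-lipschitz_on UNIV \<phi>"
proof -
  have sq: "W^2 * L^2 = (W * L) * (W * L)" by (simp add: power2_eq_square algebra_simps)
  interpret bit_fitting W L \<theta>
    using assms by unfold_locales (auto simp: sq)
  have "(2::real) ^ (L * L) \<le> 2 * 2 ^ (L^2) + real (L^2)"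
    by (simp add: power2_eq_square)
  then have "(2 * 2 ^ (L^2) + real (L^2))-lipschitz_on UNIV phi"
    by (rule lipschitz_on_mono[OF phi_lipschitz order_refl])
  moreover have "phi (real i) = \<theta> i" if "i < W^2 * L^2" for i
    using phi_of_nat that by (simp add: sq)
  ultimately show ?thesis
    using phi_in_NN[OF assms(2)] by blast
qed

end
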